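(* For $r\ge2$, the moduli space $\mathscr{M}^{[r,1]}_{0,r+1}$ consists of a single point.
   Context: Let $\mu=\left(\tfrac{r-1}{2r},-\tfrac{1}{2r},\dots,-\tfrac{1}{2r}\right)$ and let $\mathcal{C}_\mu\subset\mathrm{SU}(r)$ be the conjugacy class of $\operatorname{diag}(e^{2\pi i\mu_1},\dots,e^{2\pi i\mu_r})$ (so $\mathcal{C}_\mu\cong\mathbb{CP}^{r-1}$). For a genus $g$ surface with $r+1$ marked points, $\mathscr{M}^{[r,1]}_{g,r+1}=\{(A_1,\dots,A_g,B_1,\dots,B_g,C_1,\dots,C_{r+1})\in\mathrm{SU}(r)^{2g}\times\mathcal{C}_\mu^{r+1}:\prod_j[A_j,B_j]\prod_kC_k=I\}/\mathrm{conjugation}$. In particular $\mathscr{M}^{[r,1]}_{0,r+1}=\{(C_1,\dots,C_{r+1})\in\mathcal{C}_\mu^{r+1}:C_1\cdots C_{r+1}=I\}/\mathrm{SU}(r)$. *)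

theory Defs
  imports Complex_Main "Jordan_Normal_Form.Matrix" "Jordan_Normal_Form.Determinant"
begin

definition adj :: "complex mat \<Rightarrow> complex mat" where
  "adj A = mat (dim_col A) (dim_row A) (\<lambda>(i,j). cnj (A $$ (j,i)))"

definition SU :: "nat \<Rightarrow> complex mat set" where
  "SU r = {U. U \<in> carrier_mat r r \<and> U * adj U = 1\<^sub>m r \<and> det U = 1}"

definition mu :: "nat \<Rightarrow> nat \<Rightarrow> real" where
  "mu r k = (if k = 0 then (real r - 1) / (2 * real r) else - 1 / (2 * real r))"

definition Dmu :: "nat \<Rightarrow> complex mat" where
  "Dmu r = mat_diag r (\<lambda>k. exp (2 * pi * \<i> * complex_of_real (mu r k)))"

definition conj_class :: "nat \<Rightarrow> complex mat set" where
  "conj_class r = {U * Dmu r * adj U | U. U \<in> SU r}"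

definition tuples :: "nat \<Rightarrow> complex mat list set" where
  "tuples r = {Cs. length Cs = r + 1 \<and> set Cs \<subseteq> conj_class r
                  \<and> foldr (*) Cs (1\<^sub>m r) = 1\<^sub>m r}"

definition simconj :: "nat \<Rightarrow> (complex mat list \<times> complex mat list) set" where
  "simconj r = {(Cs, Ds). Cs \<in> tuples r \<and> Ds \<in> tuples r \<and>
                  (\<exists>U \<in> SU r. Ds = map (\<lambda>C. U * C * adj U) Cs)}"

definition moduli0 :: "nat \<Rightarrow> complex mat list set set" where
  "moduli0 r = tuples r // simconj r"

end

theory Submission
  imports Defs "Jordan_Normal_Form.Ring_Hom_Matrix"
begin

text \<open>Put \<open>\<eta> = e\<^sup>i\<^sup>\<pi>\<^sup>/\<^sup>r\<close>. The class \<open>\<C>\<^sub>\<mu>\<close> consists of the matrices \<open>\<eta>\<^sup>- H(u)\<close> with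
  \<open>H(u) = I - 2uu\<^sup>*\<close> the reflection in a unit vector \<open>u\<close>, and since \<open>\<eta>\<^sup>r\<^sup>+\<^sup>1 = -\<eta>\<close> a point of the
  moduli space is a tuple of unit vectors \<open>u\<^sub>0, \<dots>, u\<^sub>r \<in> \<complex>\<^sup>r\<close>, each up to a phase, with
  \<open>H(u\<^sub>0) \<cdots> H(u\<^sub>r) = -\<eta> I\<close>.

  Expanding the product as \<open>I - 2 \<Sum>\<^sub>j u\<^sub>j y\<^sub>j\<^sup>*\<close> with \<open>y\<^sub>j = H(u\<^sub>r) \<cdots> H(u\<^sub>j\<^sub>+\<^sub>1) u\<^sub>j\<close>, scalarity
  says that the \<open>y\<^sub>j\<close> span \<open>\<complex>\<^sup>r\<close> and are annihilated by a twisted Gram matrix of the \<open>u\<^sub>j\<close>; that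
  matrix therefore has rank one, which determines the Gram matrix of the \<open>u\<^sub>j\<close> up to rephasing.
  Two spanning families with the same Gram matrix differ by a unitary map, which can be
  rescaled into \<open>SU(r)\<close>: so there is at most one point.

  For existence, the vectors \<open>f\<^sub>k(a) = \<surd>w\<^sub>a (\<eta>\<^sup>- \<omega>\<^sup>a\<^sup>+\<^sup>1)\<^sup>k\<close>,
  \<open>\<omega> = e\<^sup>2\<^sup>\<pi>\<^sup>i\<^sup>/\<^sup>(\<^sup>r\<^sup>+\<^sup>1\<^sup>)\<close>, have the required
  Gram matrix when the weights \<open>w\<^sub>a\<close> are the discrete Fourier coefficients of its first row;
  these turn out to be positive. Running the Gram matrix computation backwards shows that the
  product of the \<open>H(f\<^sub>k)\<close> is \<open>-\<eta> I\<close>.\<close>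

declare sum.lessThan_Suc[simp del] sum.op_ivl_Suc[simp del]

subsection \<open>The root \<open>\<eta> = e^{i\<pi>/r}\<close>\<close>

definition eta :: "nat \<Rightarrow> complex" where "eta r = cis (pi / real r)"

lemma cnj_eta_mult_eta: "cnj (eta r) * eta r = 1"
  unfolding eta_def by (simp add: cis_cnj cis_mult)

lemma eta_mult_cnj_eta: "eta r * cnj (eta r) = 1"
  using cnj_eta_mult_eta[of r] by (simp add: mult.commute)

lemma cnj_eta: "cnj (eta r) = inverse (eta r)"
  using eta_mult_cnj_eta[of r] by (metis inverse_unique)

lemma eta_nonzero: "eta r \<noteq> 0"
  using eta_mult_cnj_eta[of r] by auto

lemma eta_power_Suc: assumes "r > 0" shows "eta r ^ Suc r = - eta r"
  using assms unfolding eta_def by (simp add: DeMoivre)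

lemma Im_eta_pos: assumes "r \<ge> 2" shows "Im (eta r) > 0"
proof -
  have "0 < pi / real r" using assms by simp
  moreover have "pi / real r < pi" using assms by (simp add: field_simps)
  ultimately show ?thesis unfolding eta_def by (simp add: sin_gt_zero)
qed

lemma eta_neq_pm1: assumes "r \<ge> 2" shows "eta r \<noteq> 1" "eta r \<noteq> -1"
  using Im_eta_pos[OF assms] by auto

lemma exp_mu_eq: assumes "r \<ge> 1"
  shows "exp (2 * complex_of_real pi * \<i> * complex_of_real (mu r k))
       = (if k = 0 then - cnj (eta r) else cnj (eta r))"
proof -
  have exp_cis: "exp (2 * complex_of_real pi * \<i> * complex_of_real x) = cis (2 * pi * x)" for x
    by (simp add: cis_conv_exp mult.commute mult.left_commute)
  show ?thesis
  proof (cases "k = 0")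
    case True
    have "2 * pi * mu r k = pi + (- (pi / real r))" using True assms
      by (simp add: mu_def field_simps)
    moreover have "cis (pi - pi / real r) = cis pi * cis (- (pi / real r))"
      by (simp only: cis_mult diff_conv_add_uminus)
    ultimately show ?thesis using True unfolding exp_cis eta_def
      by (simp add: cis_cnj)
  next
    case False
    have "2 * pi * mu r k = - (pi / real r)" using False assms
      by (simp add: mu_def field_simps)
    then show ?thesis using False unfolding exp_cis eta_def
      by (simp add: cis_cnj)
  qed
qed

lemma unimodular_nth_root: assumes "w * cnj w = 1" "n > 0"
  shows "\<exists>s. s ^ n = w \<and> s * cnj s = 1"
proof -
  have "complex_of_real ((cmod w)\<^sup>2) = 1" using assms(1) complex_norm_square[of w] by simp
  then have "(cmod w)\<^sup>2 = 1" by (metis of_real_eq_1_iff)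
  then have cw: "cmod w = 1" using norm_ge_zero[of w] by (auto simp: power2_eq_1_iff)
  define s where "s = cis (Arg w / real n)"
  have "s ^ n = cis (Arg w)" using assms(2) by (simp add: s_def DeMoivre)
  also have "\<dots> = w"
  proof -
    have "w \<noteq> 0" "sgn w = w" using cw by (auto simp: sgn_eq)
    then show ?thesis using Arg_correct[of w] by simp
  qed
  finally have "s ^ n = w" .
  moreover have "s * cnj s = 1" by (simp add: s_def cis_cnj cis_mult)
  ultimately show ?thesis by blast
qed

subsection \<open>Unitary matrices\<close>

definition unitary :: "nat \<Rightarrow> complex mat \<Rightarrow> bool" where
  "unitary n X \<longleftrightarrow> X \<in> carrier_mat n n \<and> X * adj X = 1\<^sub>m n"

lemma adj_carrier[simp]: "X \<in> carrier_mat n m \<Longrightarrow> adj X \<in> carrier_mat m n"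
  unfolding adj_def by auto

lemma adj_dim[simp]: "dim_row (adj X) = dim_col X" "dim_col (adj X) = dim_row X"
  unfolding adj_def by auto

lemma adj_index[simp]:
  "X \<in> carrier_mat n m \<Longrightarrow> i < m \<Longrightarrow> j < n \<Longrightarrow> adj X $$ (i,j) = cnj (X $$ (j,i))"
  unfolding adj_def by auto

lemma adj_smult: "adj (s \<cdot>\<^sub>m X) = cnj s \<cdot>\<^sub>m adj X"
  by (intro eq_matI) (auto simp: adj_def)

lemma det_adj: assumes "X \<in> carrier_mat n n" shows "det (adj X) = cnj (det X)"
proof -
  interpret comm_ring_hom cnj by unfold_locales auto
  have "adj X = map_mat cnj (transpose_mat X)"
    using assms by (intro eq_matI) (auto simp: adj_def)
  then show ?thesis using hom_det det_transpose[OF assms] by simp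
qed

lemma smult_smult_mat: "a \<cdot>\<^sub>m (b \<cdot>\<^sub>m A) = (a * b) \<cdot>\<^sub>m (A :: 'a :: comm_ring_1 mat)"
  by (intro eq_matI) auto

lemma smult_one_mat[simp]: "1 \<cdot>\<^sub>m A = (A :: 'a :: comm_ring_1 mat)"
  by (intro eq_matI) auto

lemma index_mult_mat_sum: assumes "A \<in> carrier_mat n k" "B \<in> carrier_mat k m" "i < n" "j < m"
  shows "(A * B) $$ (i,j) = (\<Sum>e<k. A $$ (i,e) * B $$ (e,j))"
  using assms by (auto simp: scalar_prod_def lessThan_atLeast0 intro!: sum.cong)

lemma unitary_carrier: "unitary n X \<Longrightarrow> X \<in> carrier_mat n n"
  unfolding unitary_def by auto

lemma unitary_adj_mult: assumes "unitary n X" shows "adj X * X = 1\<^sub>m n"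
  using assms unfolding unitary_def
  by (intro mat_mult_left_right_inverse[of X n]) auto

lemma SU_imp_unitary: "U \<in> SU n \<Longrightarrow> unitary n U"
  unfolding SU_def unitary_def by auto

lemma unitary_rows_orthonormal: assumes "unitary n X" "a < n" "b < n"
  shows "(\<Sum>f<n. X $$ (a,f) * cnj (X $$ (b,f))) = (if a = b then 1 else 0)"
proof -
  have X: "X \<in> carrier_mat n n" using assms unitary_carrier by auto
  have "(X * adj X) $$ (a,b) = (if a = b then 1 else 0)" using assms unfolding unitary_def by auto
  moreover have "(X * adj X) $$ (a,b) = (\<Sum>f<n. X $$ (a,f) * adj X $$ (f,b))"
    by (rule index_mult_mat_sum[OF X adj_carrier[OF X] assms(2,3)])
  ultimately show ?thesis using X assms by simp
qed

lemma unitary_cols_orthonormal: assumes "unitary n X" "b < n" "c < n"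
  shows "(\<Sum>a<n. cnj (X $$ (a,b)) * X $$ (a,c)) = (if b = c then 1 else 0)"
proof -
  have X: "X \<in> carrier_mat n n" using assms unitary_carrier by auto
  have "(adj X * X) $$ (b,c) = (if b = c then 1 else 0)" using assms unitary_adj_mult by auto
  moreover have "(adj X * X) $$ (b,c) = (\<Sum>a<n. adj X $$ (b,a) * X $$ (a,c))"
    by (rule index_mult_mat_sum[OF adj_carrier[OF X] X assms(2,3)])
  ultimately show ?thesis using X assms by simp
qed

lemma unitary_det_unimodular: assumes "unitary n X" shows "det X * cnj (det X) = 1"
proof -
  have X: "X \<in> carrier_mat n n" using assms unitary_carrier by auto
  have "det (X * adj X) = 1" using assms unfolding unitary_def by simp
  then show ?thesis using det_mult[OF X adj_carrier[OF X]] det_adj[OF X] by simp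
qed

text \<open>Rescaling by an \<open>n\<close>-th root of \<open>det X\<^sup>-\<^sup>1\<close> moves \<open>X\<close> into \<open>SU(n)\<close> without changing the
  conjugation action.\<close>
lemma unitary_conj_by_SU: assumes "unitary n X" "n > 0"
  shows "\<exists>U \<in> SU n. \<forall>A \<in> carrier_mat n n. U * A * adj U = X * A * adj X"
proof -
  have X: "X \<in> carrier_mat n n" using assms unitary_carrier by auto
  have "cnj (det X) * cnj (cnj (det X)) = 1"
    using unitary_det_unimodular[OF assms(1)] by (simp add: mult.commute)
  then obtain s where s: "s ^ n = cnj (det X)" "s * cnj s = 1"
    using unimodular_nth_root[OF _ assms(2)] by blast
  define U where "U = s \<cdot>\<^sub>m X"
  have U: "U \<in> carrier_mat n n" using X by (simp add: U_def)
  have conj_eq: "U * A * adj U = X * A * adj X" if A: "A \<in> carrier_mat n n" for A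
  proof -
    have "U * A * adj U = s \<cdot>\<^sub>m (X * A) * (cnj s \<cdot>\<^sub>m adj X)"
      unfolding U_def adj_smult using mult_smult_assoc_mat[OF X A] by simp
    also have "\<dots> = s \<cdot>\<^sub>m ((X * A) * (cnj s \<cdot>\<^sub>m adj X))"
      using mult_smult_assoc_mat[OF mult_carrier_mat[OF X A] smult_carrier_mat[OF adj_carrier[OF X]]]
      by simp
    also have "\<dots> = s \<cdot>\<^sub>m (cnj s \<cdot>\<^sub>m (X * A * adj X))"
      using mult_smult_distrib[OF mult_carrier_mat[OF X A] adj_carrier[OF X]] by simp
    also have "\<dots> = X * A * adj X" using s(2) by (simp add: smult_smult_mat)
    finally show ?thesis .
  qed
  have "U * adj U = 1\<^sub>m n"
    using conj_eq[of "1\<^sub>m n"] X U assms(1) unfolding unitary_def by simp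
  moreover have "det U = 1"
    using X s unitary_det_unimodular[OF assms(1)] by (simp add: U_def det_smult mult.commute)
  ultimately have "U \<in> SU n" using U unfolding SU_def by auto
  then show ?thesis using conj_eq by blast
qed

subsection \<open>Householder reflections\<close>

text \<open>Vectors of \<open>\<complex>\<^sup>n\<close> are functions \<open>nat \<Rightarrow> complex\<close> read on \<open>{..<n}\<close>; \<open>householder n u\<close> is
  \<open>I - 2 u u\<^sup>*\<close>, the reflection in \<open>u\<^sup>\<bottom>\<close> when \<open>u\<close> is a unit vector.\<close>

definition hinner :: "nat \<Rightarrow> (nat \<Rightarrow> complex) \<Rightarrow> (nat \<Rightarrow> complex) \<Rightarrow> complex" where
  "hinner n u v = (\<Sum>a<n. cnj (u a) * v a)"

definition householder :: "nat \<Rightarrow> (nat \<Rightarrow> complex) \<Rightarrow> complex mat" where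
  "householder n u = mat n n (\<lambda>(a,b). (if a = b then 1 else 0) - 2 * u a * cnj (u b))"

definition mat_apply :: "nat \<Rightarrow> complex mat \<Rightarrow> (nat \<Rightarrow> complex) \<Rightarrow> (nat \<Rightarrow> complex)" where
  "mat_apply n X u = (\<lambda>a. \<Sum>b<n. X $$ (a,b) * u b)"

definition basis0 :: "nat \<Rightarrow> complex" where "basis0 a = (if a = 0 then 1 else 0)"

lemma delta_mult[simp]:
  "(if a = b then 1 else 0) * (x::complex) = (if a = b then x else 0)"
  "x * (if a = b then 1 else 0) = (if a = b then x else 0)"
  by auto

lemma cnj_hinner: "cnj (hinner n u v) = hinner n v u"
  by (simp add: hinner_def cnj_sum mult.commute)

lemma hinner_scale: "hinner n (\<lambda>a. x * u a) (\<lambda>a. y * v a) = cnj x * y * hinner n u v"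
  by (simp add: hinner_def sum_distrib_left mult_ac)

lemma hinner_self_real: "hinner n u u = complex_of_real (\<Sum>a<n. (cmod (u a))\<^sup>2)"
  unfolding hinner_def of_real_sum complex_norm_square by (simp add: mult.commute)

lemma hinner_self_eq_0D: assumes "hinner n w w = 0" "a < n" shows "w a = 0"
proof -
  have "(\<Sum>a<n. (cmod (w a))\<^sup>2) = 0"
    using assms(1) unfolding hinner_self_real by (simp only: of_real_eq_0_iff)
  then have "(cmod (w a))\<^sup>2 = 0"
    using assms(2) sum_nonneg_eq_0_iff[of "{..<n}" "\<lambda>a. (cmod (w a))\<^sup>2"] by auto
  then show ?thesis by simp
qed

lemma exists_phase_real: "\<exists>\<phi>. \<phi> * cnj \<phi> = 1 \<and> \<phi> * z = complex_of_real (cmod z)"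
proof (cases "z = 0")
  case False
  have "z * cnj z = complex_of_real ((cmod z)\<^sup>2)" by (rule complex_norm_square[symmetric])
  then have "(cnj z / cmod z) * cnj (cnj z / cmod z) = 1 \<and> (cnj z / cmod z) * z = cmod z"
    using False by (simp add: field_simps power2_eq_square mult.commute)
  then show ?thesis by blast
qed (intro exI[of _ 1], simp)

lemma householder_carrier[simp]: "householder n u \<in> carrier_mat n n"
  unfolding householder_def by auto

lemma householder_dim[simp]: "dim_row (householder n u) = n" "dim_col (householder n u) = n"
  unfolding householder_def by auto

lemma householder_index[simp]:
  "a < n \<Longrightarrow> b < n \<Longrightarrow> householder n u $$ (a,b) = (if a = b then 1 else 0) - 2 * u a * cnj (u b)"
  unfolding householder_def by auto

lemma householder_cong: "(\<And>a. a < n \<Longrightarrow> u a = v a) \<Longrightarrow> householder n u = householder n v"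
  by (intro eq_matI) auto

lemma householder_phase: assumes "\<phi> * cnj \<phi> = 1" shows "householder n (\<lambda>a. \<phi> * u a) = householder n u"
proof (intro eq_matI)
  fix i j assume "i < dim_row (householder n u)" "j < dim_col (householder n u)"
  then show "householder n (\<lambda>a. \<phi> * u a) $$ (i, j) = householder n u $$ (i, j)"
    using assms by (simp add: algebra_simps)
qed auto

lemma adj_householder: "adj (householder n q) = householder n q"
  by (intro eq_matI) (auto simp: adj_def)

lemma householder_unitary: assumes "hinner n q q = 1" shows "unitary n (householder n q)"
  unfolding unitary_def adj_householder
proof (intro conjI householder_carrier eq_matI)
  fix a b assume "a < dim_row (1\<^sub>m n :: complex mat)" "b < dim_col (1\<^sub>m n :: complex mat)"
  then have a: "a < n" and b: "b < n" by auto
  have "(householder n q * householder n q) $$ (a,b)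
      = (\<Sum>f<n. householder n q $$ (a,f) * householder n q $$ (f,b))"
    by (rule index_mult_mat_sum[OF householder_carrier householder_carrier a b])
  also have "\<dots> = (\<Sum>f<n. (if a = f then 1 else 0) * (if f = b then 1 else 0)
      - 2 * q a * ((if f = b then 1 else 0) * cnj (q f))
      - 2 * cnj (q b) * ((if a = f then 1 else 0) * q f)
      + 4 * q a * cnj (q b) * (cnj (q f) * q f))"
    using a b by (intro sum.cong refl) (auto simp: algebra_simps)
  also have "\<dots> = (if a = b then 1 else 0) - 2 * q a * cnj (q b) - 2 * cnj (q b) * q a
      + 4 * q a * cnj (q b) * hinner n q q"
    using a b by (simp add: sum.distrib sum_subtractf sum_distrib_left[symmetric] hinner_def)
  also have "\<dots> = (1\<^sub>m n :: complex mat) $$ (a,b)"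
    using a b assms by simp
  finally show "(householder n q * householder n q) $$ (a,b) = (1\<^sub>m n :: complex mat) $$ (a,b)" .
qed auto

lemma hinner_mat_apply: assumes "unitary n X"
  shows "hinner n (mat_apply n X u) (mat_apply n X v) = hinner n u v"
proof -
  have "hinner n (mat_apply n X u) (mat_apply n X v)
      = (\<Sum>a<n. (\<Sum>b<n. cnj (X $$ (a,b)) * cnj (u b)) * (\<Sum>c<n. X $$ (a,c) * v c))"
    by (simp add: hinner_def mat_apply_def)
  also have "\<dots> = (\<Sum>a<n. \<Sum>b<n. \<Sum>c<n. cnj (u b) * v c * (cnj (X $$ (a,b)) * X $$ (a,c)))"
    by (simp only: sum_product) (simp add: algebra_simps)
  also have "\<dots> = (\<Sum>b<n. \<Sum>a<n. \<Sum>c<n. cnj (u b) * v c * (cnj (X $$ (a,b)) * X $$ (a,c)))"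
    by (rule sum.swap)
  also have "\<dots> = (\<Sum>b<n. \<Sum>c<n. \<Sum>a<n. cnj (u b) * v c * (cnj (X $$ (a,b)) * X $$ (a,c)))"
    by (rule sum.cong[OF refl], rule sum.swap)
  also have "\<dots> = (\<Sum>b<n. \<Sum>c<n. cnj (u b) * v c * (\<Sum>a<n. cnj (X $$ (a,b)) * X $$ (a,c)))"
    by (simp only: sum_distrib_left)
  also have "\<dots> = (\<Sum>b<n. \<Sum>c<n. cnj (u b) * v c * (if b = c then 1 else 0))"
    by (intro sum.cong refl) (simp add: unitary_cols_orthonormal[OF assms])
  also have "\<dots> = hinner n u v" by (simp add: hinner_def if_distrib cong: if_cong)
  finally show ?thesis .
qed

lemma unitary_conj_householder: assumes "unitary n X"
  shows "X * householder n u * adj X = householder n (mat_apply n X u)"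
proof -
  have X: "X \<in> carrier_mat n n" using assms unitary_carrier by auto
  show ?thesis
  proof (rule eq_matI)
    fix a b
    assume "a < dim_row (householder n (mat_apply n X u))" "b < dim_col (householder n (mat_apply n X u))"
    then have a: "a < n" and b: "b < n" by auto
    let ?Xu = "mat_apply n X u a"
    have XR: "X * householder n u \<in> carrier_mat n n" using X by auto
    have row: "(\<Sum>e<n. X $$ (a,e) * householder n u $$ (e,f)) = X $$ (a,f) - 2 * ?Xu * cnj (u f)"
      if f: "f < n" for f
    proof -
      have "(\<Sum>e<n. X $$ (a,e) * householder n u $$ (e,f))
          = (\<Sum>e<n. X $$ (a,e) * (if e = f then 1 else 0) - 2 * (X $$ (a,e) * u e) * cnj (u f))"
        using f by (intro sum.cong) (auto simp: algebra_simps)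
      also have "\<dots> = (\<Sum>e<n. X $$ (a,e) * (if e = f then 1 else 0))
          - (\<Sum>e<n. 2 * (X $$ (a,e) * u e) * cnj (u f))"
        by (rule sum_subtractf)
      finally show ?thesis
        using f by (simp add: mat_apply_def sum_distrib_left sum_distrib_right if_distrib cong: if_cong)
    qed
    have "(X * householder n u * adj X) $$ (a,b)
        = (\<Sum>f<n. (X * householder n u) $$ (a,f) * adj X $$ (f,b))"
      by (rule index_mult_mat_sum[OF XR adj_carrier[OF X] a b])
    also have "\<dots> = (\<Sum>f<n. (X $$ (a,f) - 2 * ?Xu * cnj (u f)) * cnj (X $$ (b,f)))"
      by (intro sum.cong refl)
        (simp add: index_mult_mat_sum[OF X householder_carrier a] row b adj_index[OF X] del: householder_index)
    also have "\<dots> = (\<Sum>f<n. X $$ (a,f) * cnj (X $$ (b,f))) - 2 * ?Xu * cnj (\<Sum>f<n. X $$ (b,f) * u f)"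
      by (simp add: algebra_simps sum_subtractf sum_distrib_left)
    also have "\<dots> = householder n (mat_apply n X u) $$ (a,b)"
      using a b unitary_rows_orthonormal[OF assms a b] by (simp add: mat_apply_def)
    finally show "(X * householder n u * adj X) $$ (a,b) = householder n (mat_apply n X u) $$ (a,b)" .
  qed (use X in auto)
qed

lemma unitary_conj_smult_householder: assumes "unitary n X"
  shows "X * (z \<cdot>\<^sub>m householder n u) * adj X = z \<cdot>\<^sub>m householder n (mat_apply n X u)"
proof -
  have X: "X \<in> carrier_mat n n" using assms unitary_carrier by auto
  have "X * (z \<cdot>\<^sub>m householder n u) * adj X = z \<cdot>\<^sub>m (X * householder n u) * adj X"
    using mult_smult_distrib[OF X householder_carrier] by simp
  also have "\<dots> = z \<cdot>\<^sub>m (X * householder n u * adj X)"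
    using mult_smult_assoc_mat[OF mult_carrier_mat[OF X householder_carrier] adj_carrier[OF X]] by simp
  finally show ?thesis using unitary_conj_householder[OF assms] by simp
qed

subsection \<open>The conjugacy class \<open>\<C>\<^sub>\<mu>\<close>\<close>

lemma cnj_basis0[simp]: "cnj (basis0 a) = basis0 a" by (simp add: basis0_def)

lemma basis0_0[simp]: "basis0 0 = 1" by (simp add: basis0_def)

lemma sum_basis0_mult: assumes "n > 0" shows "(\<Sum>a<n. basis0 a * f a) = f 0"
proof -
  have "(\<Sum>a<n. basis0 a * f a) = (\<Sum>a<n. if a = 0 then f a else 0)"
    by (intro sum.cong) (auto simp: basis0_def)
  then show ?thesis using assms by simp
qed

lemma sum_mult_basis0: assumes "n > 0" shows "(\<Sum>a<n. f a * basis0 a) = f 0"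
  using sum_basis0_mult[OF assms, of f] by (simp add: mult.commute)

lemma hinner_basis0: "n > 0 \<Longrightarrow> hinner n basis0 basis0 = 1"
  by (simp add: hinner_def basis0_def if_distrib cong: if_cong)

lemma mat_apply_basis0: "0 < n \<Longrightarrow> mat_apply n X basis0 = (\<lambda>a. X $$ (a,0))"
  by (auto simp: mat_apply_def basis0_def if_distrib cong: if_cong)

lemma Dmu_eq_householder: assumes "r \<ge> 1" shows "Dmu r = cnj (eta r) \<cdot>\<^sub>m householder r basis0"
  by (rule eq_matI) (auto simp: Dmu_def mat_diag_def exp_mu_eq[OF assms] basis0_def)

lemma conj_class_imp_householder: assumes "r \<ge> 1" "C \<in> conj_class r"
  shows "\<exists>u. hinner r u u = 1 \<and> C = cnj (eta r) \<cdot>\<^sub>m householder r u"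
proof -
  obtain U where U: "U \<in> SU r" "C = U * Dmu r * adj U"
    using assms(2) unfolding conj_class_def by auto
  have "C = cnj (eta r) \<cdot>\<^sub>m householder r (mat_apply r U basis0)"
    using U unitary_conj_smult_householder[OF SU_imp_unitary]
    by (simp add: Dmu_eq_householder[OF assms(1)])
  moreover have "hinner r (mat_apply r U basis0) (mat_apply r U basis0) = 1"
    using hinner_mat_apply[OF SU_imp_unitary[OF U(1)]] hinner_basis0 assms(1) by simp
  ultimately show ?thesis by blast
qed

text \<open>The witness is the reflection in \<open>(basis0 - v)\<^sup>\<bottom>\<close>; \<open>t < 1\<close> keeps \<open>basis0 - v\<close> nonzero.\<close>
lemma householder_maps_basis0:
  assumes n: "n > 0" and v: "hinner n v v = 1" "v 0 = complex_of_real t" and t: "t < 1"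
  shows "\<exists>q. hinner n q q = 1 \<and> (\<forall>a<n. mat_apply n (householder n q) basis0 a = v a)"
proof -
  define w where "w a = basis0 a - v a" for a
  have pos: "2 - 2 * t > 0" using t by simp
  have hinner_w: "hinner n w w = complex_of_real (2 - 2 * t)"
  proof -
    have "hinner n w w = (\<Sum>a<n. basis0 a * basis0 a) - (\<Sum>a<n. basis0 a * v a)
        - (\<Sum>a<n. cnj (v a) * basis0 a) + hinner n v v"
      unfolding hinner_def w_def by (simp add: algebra_simps sum.distrib sum_subtractf)
    then show ?thesis
      using n v by (simp add: sum_basis0_mult sum_mult_basis0)
  qed
  define q where "q a = w a / complex_of_real (sqrt (2 - 2 * t))" for a
  have "hinner n q q = hinner n w w / complex_of_real (2 - 2 * t)"
    using pos unfolding hinner_def q_def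
    by (simp add: sum_divide_distrib[symmetric] power2_eq_square[symmetric] of_real_power[symmetric])
  then have hinner_q: "hinner n q q = 1" using hinner_w pos by simp
  have "mat_apply n (householder n q) basis0 a = v a" if a: "a < n" for a
  proof -
    have "mat_apply n (householder n q) basis0 a = basis0 a - 2 * q a * cnj (q 0)"
      using n a by (simp add: mat_apply_basis0 basis0_def)
    also have "\<dots> = basis0 a - w a * (2 * cnj (w 0) / complex_of_real (2 - 2 * t))"
      using pos unfolding q_def
      by (simp add: field_simps power2_eq_square[symmetric] of_real_power[symmetric])
    also have "cnj (w 0) = complex_of_real (1 - t)" using v by (simp add: w_def)
    also have "2 * complex_of_real (1 - t) / complex_of_real (2 - 2 * t) = 1"
      using pos by (simp add: field_simps)
    finally show ?thesis by (simp add: w_def)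
  qed
  then show ?thesis using hinner_q by blast
qed

lemma exists_unitary_householder_basis0: assumes n: "n > 0" and u: "hinner n u u = 1"
  shows "\<exists>X. unitary n X \<and> householder n (mat_apply n X basis0) = householder n u"
proof -
  obtain \<phi> where \<phi>: "\<phi> * cnj \<phi> = 1" "\<phi> * u 0 = complex_of_real (cmod (u 0))"
    using exists_phase_real by blast
  define v where "v a = \<phi> * u a" for a
  define t where "t = cmod (u 0)"
  have householder_v: "householder n v = householder n u"
    unfolding v_def by (rule householder_phase[OF \<phi>(1)])
  have v0: "v 0 = complex_of_real t" using \<phi>(2) by (simp add: v_def t_def)
  have hinner_v: "hinner n v v = 1"
    using u \<phi>(1) unfolding v_def hinner_scale by (simp add: mult.commute)
  have split0: "(\<Sum>a<n. (cmod (v a))\<^sup>2) = t\<^sup>2 + (\<Sum>a\<in>{..<n} - {0}. (cmod (v a))\<^sup>2)"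
    using n v0 by (simp add: sum.remove)
  have norms: "(\<Sum>a<n. (cmod (v a))\<^sup>2) = 1"
    using hinner_v unfolding hinner_self_real by (metis of_real_eq_1_iff)
  have "t\<^sup>2 \<le> 1" using split0 norms sum_nonneg[of "{..<n} - {0}" "\<lambda>a. (cmod (v a))\<^sup>2"] by simp
  then have "t \<le> 1" unfolding t_def by (metis abs_norm_cancel abs_square_le_1)
  then consider "t < 1" | "t = 1" by linarith
  then obtain X where X: "unitary n X" "\<forall>a<n. mat_apply n X basis0 a = v a"
  proof cases
    case 1
    then show ?thesis using householder_maps_basis0[OF n hinner_v v0] householder_unitary that by blast
  next
    case 2
    then have "(\<Sum>a\<in>{..<n} - {0}. (cmod (v a))\<^sup>2) = 0" using split0 norms by simp
    then have "v a = 0" if "a < n" "a \<noteq> 0" for a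
      using sum_nonneg_eq_0_iff[of "{..<n} - {0}" "\<lambda>a. (cmod (v a))\<^sup>2"] that by auto
    then have "mat_apply n (1\<^sub>m n) basis0 a = v a" if "a < n" for a
      using that v0 2 n by (simp add: mat_apply_basis0 basis0_def)
    moreover have "unitary n (1\<^sub>m n)" unfolding unitary_def
      by (auto intro!: eq_matI simp: adj_def)
    ultimately show ?thesis using that by blast
  qed
  then show ?thesis using householder_cong[of n "mat_apply n X basis0" v] householder_v by metis
qed

lemma householder_in_conj_class: assumes "r \<ge> 1" "hinner r u u = 1"
  shows "cnj (eta r) \<cdot>\<^sub>m householder r u \<in> conj_class r"
proof -
  obtain X where X: "unitary r X" "householder r (mat_apply r X basis0) = householder r u"
    using exists_unitary_householder_basis0[of r u] assms by auto
  obtain U where U: "U \<in> SU r" "\<forall>A \<in> carrier_mat r r. U * A * adj U = X * A * adj X"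
    using unitary_conj_by_SU[OF X(1)] assms(1) by auto
  have "U * Dmu r * adj U = X * Dmu r * adj X" using U(2) by (simp add: Dmu_def)
  also have "\<dots> = cnj (eta r) \<cdot>\<^sub>m householder r u"
    using unitary_conj_smult_householder[OF X(1)] X(2) by (simp add: Dmu_eq_householder[OF assms(1)])
  finally have conj: "U * Dmu r * adj U = cnj (eta r) \<cdot>\<^sub>m householder r u" .
  show ?thesis unfolding conj_class_def using U(1) conj[symmetric] by blast
qed

subsection \<open>Products of Householder matrices\<close>

definition householder_prod :: "nat \<Rightarrow> (nat \<Rightarrow> complex) list \<Rightarrow> complex mat" where
  "householder_prod n us = foldr (*) (map (householder n) us) (1\<^sub>m n)"

text \<open>\<open>y\<^sub>j = householder_dual n [u\<^sub>0, \<dots>, u\<^sub>m] ! j\<close> is \<open>H(u\<^sub>m) \<cdots> H(u\<^sub>j\<^sub>+\<^sub>1) u\<^sub>j\<close> for \<open>H = householder n\<close>,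
  so that \<open>H(u\<^sub>0) \<cdots> H(u\<^sub>m) = I - 2 \<Sum>\<^sub>j u\<^sub>j y\<^sub>j\<^sup>*\<close>.\<close>
fun householder_dual :: "nat \<Rightarrow> (nat \<Rightarrow> complex) list \<Rightarrow> (nat \<Rightarrow> complex) list" where
  "householder_dual n [] = []"
| "householder_dual n (u # us) =
    (let ys = householder_dual n us
     in (\<lambda>a. u a - 2 * (\<Sum>j<length us. hinner n (us!j) u * (ys!j) a)) # ys)"

lemma length_householder_dual[simp]: "length (householder_dual n us) = length us"
  by (induction us) (auto simp: Let_def)

lemma householder_dual_Cons_0:
  "householder_dual n (u # us) ! 0
   = (\<lambda>a. u a - 2 * (\<Sum>j<length us. hinner n (us!j) u * (householder_dual n us ! j) a))"
  by (simp add: Let_def)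

lemma householder_dual_Cons_Suc: "householder_dual n (u # us) ! Suc j = householder_dual n us ! j"
  by (simp add: Let_def)

lemma householder_prod_carrier[simp]: "householder_prod n us \<in> carrier_mat n n"
  by (induction us) (auto simp: householder_prod_def)

lemma householder_prod_Cons: "householder_prod n (u # us) = householder n u * householder_prod n us"
  by (simp add: householder_prod_def)

lemma householder_prod_cong:
  assumes "length us = length vs" "\<And>k. k < length us \<Longrightarrow> householder n (us!k) = householder n (vs!k)"
  shows "householder_prod n us = householder_prod n vs"
proof -
  have "map (householder n) us = map (householder n) vs" by (rule nth_equalityI) (use assms in auto)
  then show ?thesis unfolding householder_prod_def by simp
qed

lemma foldr_smult_householder:
  "foldr (*) (map (\<lambda>u. z \<cdot>\<^sub>m householder n u) us) (1\<^sub>m n) = z ^ length us \<cdot>\<^sub>m householder_prod n us"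
proof (induction us)
  case (Cons u us)
  have "foldr (*) (map (\<lambda>u. z \<cdot>\<^sub>m householder n u) (u # us)) (1\<^sub>m n)
      = (z \<cdot>\<^sub>m householder n u) * (z ^ length us \<cdot>\<^sub>m householder_prod n us)"
    using Cons by simp
  also have "\<dots> = z \<cdot>\<^sub>m (z ^ length us \<cdot>\<^sub>m (householder n u * householder_prod n us))"
    using mult_smult_assoc_mat[OF householder_carrier smult_carrier_mat[OF householder_prod_carrier]]
      mult_smult_distrib[OF householder_carrier householder_prod_carrier] by simp
  also have "\<dots> = z ^ length (u # us) \<cdot>\<^sub>m householder_prod n (u # us)"
    by (simp add: smult_smult_mat householder_prod_Cons)
  finally show ?case .
qed (simp add: householder_prod_def)

lemma householder_mult_index:
  assumes "M \<in> carrier_mat n m" "a < n" "b < m"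
  shows "(householder n u * M) $$ (a,b) = M $$ (a,b) - 2 * u a * (\<Sum>e<n. cnj (u e) * M $$ (e,b))"
proof -
  have "(householder n u * M) $$ (a,b) = (\<Sum>e<n. householder n u $$ (a,e) * M $$ (e,b))"
    by (rule index_mult_mat_sum[OF householder_carrier assms])
  also have "\<dots> = (\<Sum>e<n. (if a = e then M $$ (e,b) else 0) - 2 * u a * (cnj (u e) * M $$ (e,b)))"
    using assms(2) by (intro sum.cong) (auto simp: algebra_simps)
  also have "\<dots> = (\<Sum>e<n. (if a = e then M $$ (e,b) else 0)) - (\<Sum>e<n. 2 * u a * (cnj (u e) * M $$ (e,b)))"
    by (rule sum_subtractf)
  finally show ?thesis using assms(2) by (simp add: sum_distrib_left)
qed

lemma householder_prod_index: assumes "a < n" "b < n"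
  shows "householder_prod n us $$ (a,b)
       = (if a = b then 1 else 0) - 2 * (\<Sum>j<length us. (us!j) a * cnj ((householder_dual n us ! j) b))"
  using assms
proof (induction us arbitrary: a)
  case Nil
  then show ?case by (simp add: householder_prod_def)
next
  case (Cons u us)
  define ys where "ys = householder_dual n us"
  define S where "S e = (\<Sum>j<length us. (us!j) e * cnj ((ys!j) b))" for e
  have IH: "householder_prod n us $$ (e,b) = (if e = b then 1 else 0) - 2 * S e" if "e < n" for e
    using Cons.IH[OF that assms(2)] by (simp add: S_def ys_def)
  have "(\<Sum>e<n. cnj (u e) * householder_prod n us $$ (e,b))
      = (\<Sum>e<n. cnj (u e) * (if e = b then 1 else 0) - 2 * (cnj (u e) * S e))"
    by (intro sum.cong refl) (simp add: IH algebra_simps del: delta_mult)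
  also have "\<dots> = (\<Sum>e<n. cnj (u e) * (if e = b then 1 else 0)) - 2 * (\<Sum>e<n. cnj (u e) * S e)"
    by (simp only: sum_subtractf sum_distrib_left)
  also have "(\<Sum>e<n. cnj (u e) * S e) = (\<Sum>j<length us. hinner n u (us!j) * cnj ((ys!j) b))"
  proof -
    have "(\<Sum>e<n. cnj (u e) * S e) = (\<Sum>e<n. \<Sum>j<length us. cnj (u e) * (us!j) e * cnj ((ys!j) b))"
      by (simp add: S_def sum_distrib_left mult.assoc)
    also have "\<dots> = (\<Sum>j<length us. \<Sum>e<n. cnj (u e) * (us!j) e * cnj ((ys!j) b))"
      by (rule sum.swap)
    finally show ?thesis by (simp add: hinner_def sum_distrib_right)
  qed
  finally have col: "(\<Sum>e<n. cnj (u e) * householder_prod n us $$ (e,b))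
      = cnj ((householder_dual n (u # us) ! 0) b)"
    using assms(2)
    by (simp add: householder_dual_Cons_0 cnj_sum cnj_hinner ys_def del: householder_dual.simps)
  have "(\<Sum>j<length (u # us). ((u # us)!j) a * cnj ((householder_dual n (u # us) ! j) b))
      = u a * cnj ((householder_dual n (u # us) ! 0) b) + S a"
    unfolding length_Cons sum.lessThan_Suc_shift householder_dual_Cons_Suc nth_Cons_Suc
    by (simp add: S_def ys_def del: householder_dual.simps)
  moreover have "householder_prod n (u # us) $$ (a,b)
      = householder_prod n us $$ (a,b) - 2 * u a * cnj ((householder_dual n (u # us) ! 0) b)"
    unfolding householder_prod_Cons col[symmetric]
    by (rule householder_mult_index[OF householder_prod_carrier Cons.prems])
  ultimately show ?case
    using IH[OF Cons.prems(1)] by (simp add: algebra_simps del: householder_dual.simps)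
qed

lemma householder_dual_nth: assumes "k < length us"
  shows "(householder_dual n us ! k) a
       = (us!k) a - 2 * (\<Sum>j\<in>{Suc k..<length us}. hinner n (us!j) (us!k) * (householder_dual n us ! j) a)"
  using assms
proof (induction us arbitrary: k)
  case (Cons u us)
  show ?case
  proof (cases k)
    case 0
    have "(\<Sum>j\<in>{Suc 0..<length (u # us)}.
            hinner n ((u # us)!j) ((u # us)!0) * (householder_dual n (u # us) ! j) a)
        = (\<Sum>j\<in>{0..<length us}. hinner n (us!j) u * (householder_dual n us ! j) a)"
      unfolding length_Cons sum.shift_bounds_Suc_ivl
      by (simp add: householder_dual_Cons_Suc del: householder_dual.simps)
    then show ?thesis unfolding 0 by (simp only: householder_dual_Cons_0) (simp add: lessThan_atLeast0)
  next
    case (Suc k')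
    then have k': "k' < length us" using Cons.prems by simp
    have shift: "(\<Sum>j\<in>{Suc k..<length (u # us)}.
            hinner n ((u # us)!j) ((u # us)!k) * (householder_dual n (u # us) ! j) a)
        = (\<Sum>j\<in>{Suc k'..<length us}. hinner n (us!j) (us!k') * (householder_dual n us ! j) a)"
      unfolding length_Cons Suc sum.shift_bounds_Suc_ivl
      by (simp add: householder_dual_Cons_Suc del: householder_dual.simps)
    have "(householder_dual n (u # us) ! k) a = (householder_dual n us ! k') a"
      by (simp only: Suc householder_dual_Cons_Suc)
    also have "\<dots>
        = (us!k') a - 2 * (\<Sum>j\<in>{Suc k'..<length us}. hinner n (us!j) (us!k') * (householder_dual n us ! j) a)"
      by (rule Cons.IH[OF k'])
    finally show ?thesis unfolding shift by (simp only: Suc nth_Cons_Suc)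
  qed
qed simp

lemma householder_dual_tail_sum:
  assumes len: "length us = m"
    and low: "\<And>j k. k < j \<Longrightarrow> j < m \<Longrightarrow> hinner n (us!j) (us!k) = d"
    and "k \<le> m"
  shows "(\<Sum>j\<in>{k..<m}. (householder_dual n us ! j) b) = (\<Sum>j\<in>{k..<m}. (1 - 2 * d) ^ (j - k) * (us!j) b)"
  using \<open>k \<le> m\<close>
proof (induction "m - k" arbitrary: k)
  case (Suc i)
  then have k: "k < m" by simp
  have IH: "(\<Sum>j\<in>{Suc k..<m}. (householder_dual n us ! j) b)
      = (\<Sum>j\<in>{Suc k..<m}. (1 - 2 * d) ^ (j - Suc k) * (us!j) b)"
    using Suc(1)[of "Suc k"] Suc(2) k by simp
  have "(householder_dual n us ! k) b
      = (us!k) b - 2 * (\<Sum>j\<in>{Suc k..<m}. hinner n (us!j) (us!k) * (householder_dual n us ! j) b)"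
    using householder_dual_nth[of k us n b] k len by simp
  also have "\<dots> = (us!k) b - 2 * d * (\<Sum>j\<in>{Suc k..<m}. (householder_dual n us ! j) b)"
    by (simp add: low sum_distrib_left mult.assoc)
  finally have yk: "(householder_dual n us ! k) b
      = (us!k) b - 2 * d * (\<Sum>j\<in>{Suc k..<m}. (householder_dual n us ! j) b)" .
  have pow: "(1 - 2 * d) * (1 - 2 * d) ^ (j - Suc k) = (1 - 2 * d) ^ (j - k)"
    if "j \<in> {Suc k..<m}" for j
  proof -
    have "j - k = Suc (j - Suc k)" using that by auto
    then show ?thesis by simp
  qed
  have "(\<Sum>j\<in>{k..<m}. (householder_dual n us ! j) b)
      = (householder_dual n us ! k) b + (\<Sum>j\<in>{Suc k..<m}. (householder_dual n us ! j) b)"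
    by (rule sum.atLeast_Suc_lessThan[OF k])
  also have "\<dots> = (us!k) b + (1 - 2 * d) * (\<Sum>j\<in>{Suc k..<m}. (1 - 2 * d) ^ (j - Suc k) * (us!j) b)"
    unfolding yk IH by (simp add: algebra_simps)
  also have "\<dots> = (us!k) b + (\<Sum>j\<in>{Suc k..<m}. (1 - 2 * d) ^ (j - k) * (us!j) b)"
    by (simp add: sum_distrib_left pow mult.assoc[symmetric])
  also have "\<dots> = (\<Sum>j\<in>{k..<m}. (1 - 2 * d) ^ (j - k) * (us!j) b)"
    using sum.atLeast_Suc_lessThan[OF k, of "\<lambda>j. (1 - 2 * d) ^ (j - k) * (us!j) b"] by simp
  finally show ?case .
qed simp
text \<open>The kernel of \<open>extended_rows n Y\<close> consists of the linear relations \<open>\<Sum>\<^sub>j z\<^sub>j Y\<^sub>j = 0\<close> among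
  \<open>Y 0, \<dots>, Y n \<in> \<complex>\<^sup>n\<close> with \<open>z\<^sub>0 = 0\<close>.\<close>
definition extended_rows :: "nat \<Rightarrow> (nat \<Rightarrow> nat \<Rightarrow> complex) \<Rightarrow> complex mat" where
  "extended_rows n Y = mat (Suc n) (Suc n) (\<lambda>(i,j). if i < n then Y j i else if j = 0 then 1 else 0)"

lemma extended_rows_mult_index:
  assumes inv: "\<And>a b. a < n \<Longrightarrow> b < n \<Longrightarrow> (\<Sum>j<Suc n. Y j b * W j a) = (if a = b then 1 else 0)"
    and kx: "\<And>b. b < n \<Longrightarrow> (\<Sum>j<Suc n. x j * Y j b) = 0"
    and ia: "i < Suc n" "a < Suc n"
  shows "(extended_rows n Y * mat (Suc n) (Suc n) (\<lambda>(j,a). if a < n then W j a else x j)) $$ (i,a)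
       = (if i < n then (if a = i then 1 else 0) else if a < n then W 0 a else x 0)"
proof -
  have "(extended_rows n Y * mat (Suc n) (Suc n) (\<lambda>(j,a). if a < n then W j a else x j)) $$ (i,a)
      = (\<Sum>j<Suc n. (if i < n then Y j i else (if j = 0 then 1 else 0)) * (if a < n then W j a else x j))"
    using ia by (auto simp: extended_rows_def scalar_prod_def lessThan_atLeast0 intro!: sum.cong)
  also have "\<dots> = (if i < n then (if a = i then 1 else 0) else if a < n then W 0 a else x 0)"
  proof (cases "i < n")
    case True
    show ?thesis
    proof (cases "a < n")
      case True
      then show ?thesis using inv[OF True \<open>i < n\<close>] \<open>i < n\<close> by simp
    next
      case False
      then show ?thesis using kx[OF True] True ia by (simp add: mult.commute)
    qed
  qed simp
  finally show ?thesis .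
qed

text \<open>Multiplying by \<open>F\<close>, whose first \<open>n\<close> columns hold the right inverse \<open>W\<close> and whose last column
  is the relation \<open>x\<close>, gives a triangular matrix with diagonal \<open>1, \<dots>, 1, x 0\<close>.\<close>
lemma det_extended_rows_nonzero:
  assumes inv: "\<And>a b. a < n \<Longrightarrow> b < n \<Longrightarrow> (\<Sum>j<Suc n. Y j b * W j a) = (if a = b then 1 else 0)"
    and kx: "\<And>b. b < n \<Longrightarrow> (\<Sum>j<Suc n. x j * Y j b) = 0" and x0: "x 0 \<noteq> 0"
  shows "det (extended_rows n Y) \<noteq> 0"
proof -
  define E where "E = extended_rows n Y"
  define F where "F = mat (Suc n) (Suc n) (\<lambda>(j,a). if a < n then W j a else x j)"
  have E: "E \<in> carrier_mat (Suc n) (Suc n)" and F: "F \<in> carrier_mat (Suc n) (Suc n)"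
    by (auto simp: E_def F_def extended_rows_def)
  note EF_index = extended_rows_mult_index[OF inv kx, folded E_def F_def]
  have EF: "transpose_mat (E * F) \<in> carrier_mat (Suc n) (Suc n)" using E F by simp
  have "upper_triangular (transpose_mat (E * F))"
    unfolding upper_triangular_def
  proof (intro allI impI)
    fix i j assume "i < dim_row (transpose_mat (E * F))" "j < i"
    then show "transpose_mat (E * F) $$ (i,j) = 0"
      using EF_index[of j i] E F by (simp del: index_mult_mat(1))
  qed
  moreover have "0 \<notin> set (diag_mat (transpose_mat (E * F)))"
  proof
    assume "0 \<in> set (diag_mat (transpose_mat (E * F)))"
    then obtain i where "i < Suc n" "(E * F) $$ (i,i) = 0"
      using E F by (auto simp: diag_mat_def simp del: index_mult_mat(1)) (meson less_SucI)
    then show False using EF_index[of i i] E F x0 by (simp del: index_mult_mat(1) split: if_splits)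
  qed
  ultimately have "det (transpose_mat (E * F)) \<noteq> 0"
    using upper_triangular_imp_det_eq_0_iff[OF EF] by simp
  then have "det E * det F \<noteq> 0"
    using det_transpose[OF mult_carrier_mat[OF E F]] by (simp add: det_mult[OF E F])
  then show ?thesis by (simp add: E_def)
qed

lemma kernel_one_dim:
  fixes Y W :: "nat \<Rightarrow> nat \<Rightarrow> complex" and x z :: "nat \<Rightarrow> complex"
  assumes inv: "\<And>a b. a < n \<Longrightarrow> b < n \<Longrightarrow> (\<Sum>j<Suc n. Y j b * W j a) = (if a = b then 1 else 0)"
    and kx: "\<And>b. b < n \<Longrightarrow> (\<Sum>j<Suc n. x j * Y j b) = 0" and x0: "x 0 \<noteq> 0"
    and kz: "\<And>b. b < n \<Longrightarrow> (\<Sum>j<Suc n. z j * Y j b) = 0" and z0: "z 0 = 0"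
    and j: "j < Suc n"
  shows "z j = 0"
proof -
  define E where "E = extended_rows n Y"
  have E: "E \<in> carrier_mat (Suc n) (Suc n)" by (simp add: E_def extended_rows_def)
  have "E *\<^sub>v vec (Suc n) z = 0\<^sub>v (Suc n)"
  proof (rule eq_vecI)
    fix i assume "i < dim_vec (0\<^sub>v (Suc n) :: complex vec)"
    then have i: "i < Suc n" by simp
    have "(E *\<^sub>v vec (Suc n) z) $ i = (\<Sum>j<Suc n. (if i < n then Y j i else (if j = 0 then 1 else 0)) * z j)"
      using i by (auto simp: E_def extended_rows_def scalar_prod_def lessThan_atLeast0 intro!: sum.cong)
    also have "\<dots> = 0"
      using kz[of i] z0 by (cases "i < n") (simp_all add: mult.commute)
    finally show "(E *\<^sub>v vec (Suc n) z) $ i = 0\<^sub>v (Suc n) $ i" using i by simp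
  qed (use E in auto)
  then have "vec (Suc n) z = 0\<^sub>v (Suc n)"
    using det_0_iff_vec_prod_zero[OF E] det_extended_rows_nonzero[OF inv kx x0] unfolding E_def
    by (metis carrier_vec_dim_vec dim_vec)
  then show ?thesis using j by (metis index_vec index_zero_vec(1))
qed

text \<open>With \<open>y = householder_dual n us\<close>, the recursion for \<open>y\<close> reads
  \<open>\<Sum>\<^sub>j twisted_gram n c us j k \<cdot> y\<^sub>j = \<Sum>\<^sub>j \<langle>u\<^sub>j, u\<^sub>k\<rangle> y\<^sub>j - c u\<^sub>k\<close>.\<close>
definition twisted_gram :: "nat \<Rightarrow> complex \<Rightarrow> (nat \<Rightarrow> complex) list \<Rightarrow> nat \<Rightarrow> nat \<Rightarrow> complex" where
  "twisted_gram n c us j k = hinner n (us!j) (us!k) - c * (if j = k then 1 else 0)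
     - (if k < j then 2 * c * hinner n (us!j) (us!k) else 0)"

lemma sum_filter_gt: "(\<Sum>j<m. (if k < j then f j else 0)) = (\<Sum>j\<in>{Suc k..<m}. f j)"
proof -
  have "{Suc k..<m} = {j \<in> {..<m}. k < j}" by auto
  moreover have "(\<Sum>j\<in>{j\<in>{..<m}. k<j}. f j) = (\<Sum>j<m. if k<j then f j else 0)"
    by (rule sum.inter_filter) simp
  ultimately show ?thesis by simp
qed

lemma twisted_gram_dual_sum:
  assumes k: "k < length us"
  shows "(\<Sum>j<length us. twisted_gram n c us j k * (householder_dual n us ! j) b)
       = (\<Sum>j<length us. (householder_dual n us ! j) b * hinner n (us!j) (us!k)) - c * (us!k) b"
proof -
  let ?L = "length us"
  let ?y = "\<lambda>j. (householder_dual n us ! j) b" and ?g = "\<lambda>j. hinner n (us!j) (us!k)"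
  have "(\<Sum>j<?L. twisted_gram n c us j k * ?y j) = (\<Sum>j<?L. ?y j * ?g j - c * (if j = k then ?y j else 0)
      - 2 * c * (if k < j then ?g j * ?y j else 0))"
    by (intro sum.cong refl) (auto simp: twisted_gram_def algebra_simps)
  also have "\<dots> = (\<Sum>j<?L. ?y j * ?g j) - c * (\<Sum>j<?L. (if j = k then ?y j else 0))
      - 2 * c * (\<Sum>j<?L. (if k < j then ?g j * ?y j else 0))"
    by (simp only: sum_subtractf sum_distrib_left)
  also have "\<dots> = (\<Sum>j<?L. ?y j * ?g j) - c * ?y k - 2 * c * (\<Sum>j\<in>{Suc k..<?L}. ?g j * ?y j)"
    using k by (simp add: sum_filter_gt)
  also have "\<dots> = (\<Sum>j<?L. ?y j * ?g j) - c * (us!k) b"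
  proof -
    have "(us!k) b = ?y k + 2 * (\<Sum>j\<in>{Suc k..<?L}. ?g j * ?y j)"
      using householder_dual_nth[OF k, of n b] by (simp add: algebra_simps)
    then show ?thesis by (simp add: algebra_simps)
  qed
  finally show ?thesis .
qed

lemma scalar_householder_prod_dual_sum:
  assumes prod: "householder_prod n us = lam \<cdot>\<^sub>m 1\<^sub>m n" and ab: "a < n" "b < n"
  shows "(\<Sum>j<length us. (us!j) a * cnj ((householder_dual n us ! j) b))
       = (if a = b then (1 - lam) / 2 else 0)"
  using householder_prod_index[OF ab, of us] ab unfolding prod by (auto simp: field_simps)

lemma scalar_householder_prod_dual_hinner:
  assumes prod: "householder_prod n us = lam \<cdot>\<^sub>m 1\<^sub>m n" and b: "b < n"
  shows "(\<Sum>j<length us. (householder_dual n us ! j) b * hinner n (us!j) v) = cnj ((1 - lam) / 2) * v b"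
proof -
  let ?L = "length us" and ?y = "householder_dual n us"
  have "(\<Sum>j<?L. (?y ! j) b * hinner n (us!j) v) = (\<Sum>j<?L. \<Sum>a<n. (?y ! j) b * cnj ((us!j) a) * v a)"
    by (simp add: hinner_def sum_distrib_left mult.assoc)
  also have "\<dots> = (\<Sum>a<n. \<Sum>j<?L. (?y ! j) b * cnj ((us!j) a) * v a)" by (rule sum.swap)
  also have "\<dots> = (\<Sum>a<n. cnj (\<Sum>j<?L. (us!j) a * cnj ((?y ! j) b)) * v a)"
    by (intro sum.cong refl) (simp add: cnj_sum sum_distrib_right sum_distrib_left mult_ac)
  also have "\<dots> = (\<Sum>a<n. if a = b then cnj ((1 - lam) / 2) * v a else 0)"
    using scalar_householder_prod_dual_sum[OF prod _ b] by (intro sum.cong) auto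
  also have "\<dots> = cnj ((1 - lam) / 2) * v b" using b by simp
  finally show ?thesis .
qed

lemma twisted_gram_kernel:
  assumes "householder_prod n us = lam \<cdot>\<^sub>m 1\<^sub>m n" "b < n" "k < length us"
  shows "(\<Sum>j<length us. twisted_gram n (cnj ((1 - lam) / 2)) us j k * (householder_dual n us ! j) b) = 0"
  using twisted_gram_dual_sum[OF assms(3)] scalar_householder_prod_dual_hinner[OF assms(1,2)] by simp

text \<open>Since \<open>householder_dual\<close> spans \<open>\<complex>\<^sup>n\<close>, the columns of the \<open>(n+1) \<times> (n+1)\<close> matrix
  \<open>twisted_gram\<close> all lie in a line.\<close>
lemma twisted_gram_rank_one:
  assumes prod: "householder_prod n us = lam \<cdot>\<^sub>m 1\<^sub>m n"
    and len: "length us = Suc n" and lam1: "lam \<noteq> 1"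
    and N00: "twisted_gram n (cnj ((1 - lam) / 2)) us 0 0 \<noteq> 0"
    and jk: "j < Suc n" "k < Suc n"
  defines "N \<equiv> twisted_gram n (cnj ((1 - lam) / 2)) us"
  shows "N j k * N 0 0 = N 0 k * N j 0"
proof -
  let ?c = "cnj ((1 - lam) / 2)" and ?y = "householder_dual n us"
  have c0: "?c \<noteq> 0" using lam1 by simp
  have kernel: "(\<Sum>j<Suc n. N j k * (?y ! j) b) = 0" if "b < n" "k < Suc n" for b k
    using twisted_gram_kernel[OF prod that(1)] that(2) len unfolding N_def by simp
  define z where "z j = N j k * N 0 0 - N 0 k * N j 0" for j
  have "z j = 0"
  proof (rule kernel_one_dim[where Y = "\<lambda>j b. (?y ! j) b" and W = "\<lambda>j a. cnj ((us!j) a) / ?c"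
        and x = "\<lambda>j. N j 0"])
    fix a b assume ab: "a < n" "b < n"
    have "(\<Sum>j<Suc n. (?y ! j) b * (cnj ((us!j) a) / ?c))
        = (\<Sum>j<Suc n. cnj ((us!j) a * cnj ((?y ! j) b))) / ?c"
      unfolding sum_divide_distrib by (intro sum.cong refl) (simp add: mult.commute)
    also have "\<dots> = cnj (\<Sum>j<Suc n. (us!j) a * cnj ((?y ! j) b)) / ?c"
      by (simp only: cnj_sum)
    also have "\<dots> = (if a = b then 1 else 0)"
      using scalar_householder_prod_dual_sum[OF prod ab] len c0 by simp
    finally show "(\<Sum>j<Suc n. (?y ! j) b * (cnj ((us!j) a) / ?c)) = (if a = b then 1 else 0)" .
  next
    fix b assume b: "b < n"
    have "(\<Sum>j<Suc n. z j * (?y ! j) b)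
        = N 0 0 * (\<Sum>j<Suc n. N j k * (?y ! j) b) - N 0 k * (\<Sum>j<Suc n. N j 0 * (?y ! j) b)"
      by (simp add: z_def algebra_simps sum_subtractf sum_distrib_left)
    then show "(\<Sum>j<Suc n. z j * (?y ! j) b) = 0" using kernel[OF b] jk by simp
  qed (use kernel N00 jk in \<open>auto simp: z_def N_def\<close>)
  then show ?thesis by (simp add: z_def)
qed

subsection \<open>Uniqueness: the Gram matrix is forced\<close>

definition model_gram :: "nat \<Rightarrow> nat \<Rightarrow> nat \<Rightarrow> complex" where
  "model_gram r j l = (if j = l then 1 else if j < l then (1 - cnj (eta r)) / 2 else (1 - eta r) / 2)"

lemma cnj_model_gram: "cnj (model_gram r j l) = model_gram r l j"
  by (simp add: model_gram_def)

lemma gram_eq_model_gram_if_upper: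
  assumes "\<And>j l. j \<le> l \<Longrightarrow> l < m \<Longrightarrow> hinner n (vs!j) (vs!l) = model_gram r j l"
    and "j < m" "l < m"
  shows "hinner n (vs!j) (vs!l) = model_gram r j l"
proof (cases "j \<le> l")
  case False
  have "hinner n (vs!j) (vs!l) = cnj (hinner n (vs!l) (vs!j))" by (simp add: cnj_hinner)
  also have "\<dots> = model_gram r j l" using assms(1)[of l j] False assms(2) by (simp add: cnj_model_gram)
  finally show ?thesis .
qed (use assms in blast)

text \<open>The rank-one property of the twisted Gram matrix, written out for the Gram entries
  \<open>g j k = \<langle>u\<^sub>j, u\<^sub>k\<rangle>\<close> of unit vectors with \<open>H(u\<^sub>0) \<cdots> H(u\<^sub>r) = -\<eta> I\<close>.\<close>
lemma scalar_householder_prod_gram_relations: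
  assumes r2: "r \<ge> 2" and len: "length us = Suc r"
    and unit: "\<And>k. k < Suc r \<Longrightarrow> hinner r (us!k) (us!k) = 1"
    and prod: "householder_prod r us = (- eta r) \<cdot>\<^sub>m 1\<^sub>m r"
  defines "g \<equiv> \<lambda>j k. hinner r (us!j) (us!k)" and "D \<equiv> (1 - cnj (eta r)) / 2"
  shows "\<And>k. 0 < k \<Longrightarrow> k < Suc r \<Longrightarrow> g 0 k * cnj (g 0 k) = cnj D * D"
    and "\<And>j k. 0 < j \<Longrightarrow> j < k \<Longrightarrow> k < Suc r \<Longrightarrow> g j k * D = - cnj (eta r) * (g 0 k * cnj (g 0 j))"
proof -
  define e where "e = eta r"
  have he: "e * cnj e = 1" unfolding e_def by (rule eta_mult_cnj_eta)
  have "cnj e \<noteq> 1" using eta_neq_pm1(1)[OF r2] unfolding e_def by (metis complex_cnj_cnj complex_cnj_one)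
  then have D0: "D \<noteq> 0" by (simp add: D_def e_def)
  have minus_e: "- e \<noteq> 1" using eta_neq_pm1(2)[OF r2] unfolding e_def by (metis minus_equation_iff)
  define N where "N = twisted_gram r (cnj ((1 - (- e)) / 2)) us"
  have Nkk: "N k k = D" if "k < Suc r" for k
    using unit[OF that] by (simp add: N_def twisted_gram_def D_def e_def field_simps)
  have rank_one: "N j k * D = N 0 k * N j 0" if "j < Suc r" "k < Suc r" for j k
    using twisted_gram_rank_one[OF prod[folded e_def] len minus_e _ that] Nkk[of 0] D0
    unfolding N_def by simp
  have Nk0: "N k 0 = - cnj e * g k 0" if "0 < k" for k
    using that by (simp add: N_def twisted_gram_def g_def field_simps)
  have Njk: "N j k = g j k" if "j < k" for j k
    using that by (simp add: N_def twisted_gram_def g_def)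
  have g_swap: "g k j = cnj (g j k)" for j k by (simp add: g_def cnj_hinner)
  show "g 0 k * cnj (g 0 k) = cnj D * D" if "0 < k" "k < Suc r" for k
  proof -
    have "D * D = g 0 k * (- cnj e * cnj (g 0 k))"
      using rank_one[OF that(2) that(2)] Nkk[OF that(2)] Nk0[OF that(1)] Njk[OF that(1)] g_swap[of 0 k]
      by simp
    then have "- e * (D * D) = (e * cnj e) * (g 0 k * cnj (g 0 k))" by (simp add: algebra_simps)
    then have "g 0 k * cnj (g 0 k) = (- e * D) * D" using he by (simp add: mult.assoc)
    also have "- e * D = cnj D" unfolding D_def using he by (simp add: e_def[symmetric] algebra_simps)
    finally show ?thesis .
  qed
  show "g j k * D = - cnj (eta r) * (g 0 k * cnj (g 0 j))" if "0 < j" "j < k" "k < Suc r" for j k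
    using rank_one[of j k] that Njk[OF that(2)] Nk0[OF that(1)] Njk[of 0 k] g_swap[of 0 j]
    by (simp add: algebra_simps e_def)
qed

text \<open>Rescaling \<open>u\<^sub>k\<close> (\<open>k > 0\<close>) by the phase of \<open>\<langle>u\<^sub>k, u\<^sub>0\<rangle>\<close> makes all entries above the diagonal
  of the Gram matrix \<open>g\<close> equal to \<open>D\<close>.\<close>
lemma phase_normalized_gram:
  fixes g :: "nat \<Rightarrow> nat \<Rightarrow> complex"
  assumes De: "- e * D = cnj D" and D0: "D \<noteq> 0"
    and rel1: "\<And>k. 0 < k \<Longrightarrow> k < m \<Longrightarrow> g 0 k * cnj (g 0 k) = cnj D * D"
    and rel2: "\<And>j k. 0 < j \<Longrightarrow> j < k \<Longrightarrow> k < m \<Longrightarrow> g j k * D = - cnj e * (g 0 k * cnj (g 0 j))"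
  defines "\<phi> \<equiv> \<lambda>k. if k = 0 then 1 else cnj (g 0 k) / cnj D"
  shows "\<And>k. k < m \<Longrightarrow> cnj (\<phi> k) * \<phi> k = 1"
    and "\<And>j l. j < l \<Longrightarrow> l < m \<Longrightarrow> cnj (\<phi> j) * \<phi> l * g j l = D"
proof -
  have cnj_\<phi>: "cnj (\<phi> k) = (if k = 0 then 1 else g 0 k / D)" for k
    by (simp add: \<phi>_def)
  show "cnj (\<phi> k) * \<phi> k = 1" if "k < m" for k
    using rel1[of k] that D0 unfolding cnj_\<phi> by (simp add: \<phi>_def)
  show "cnj (\<phi> j) * \<phi> l * g j l = D" if jl: "j < l" "l < m" for j l
  proof (cases "j = 0")
    case True
    have "cnj (\<phi> j) * \<phi> l * g j l = (g 0 l * cnj (g 0 l)) / cnj D"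
      using True jl unfolding cnj_\<phi> by (simp add: \<phi>_def mult.commute)
    also have "\<dots> = D" using rel1[of l] jl D0 by simp
    finally show ?thesis .
  next
    case False
    have gjl: "g j l = - cnj e * (g 0 l * cnj (g 0 j)) / D"
      using rel2[of j l] False jl D0 by (simp add: field_simps)
    have "cnj (\<phi> j) * \<phi> l * g j l
        = - cnj e * ((g 0 j * cnj (g 0 j)) * (g 0 l * cnj (g 0 l))) / (D * cnj D * D)"
      using False jl unfolding cnj_\<phi> by (simp add: \<phi>_def gjl field_simps)
    also have "\<dots> = - cnj e * cnj D"
      using rel1[of j] rel1[of l] False jl D0 by (simp add: field_simps)
    also have "\<dots> = D" using arg_cong[OF De, of cnj] by simp
    finally show ?thesis .
  qed
qed

lemma scalar_householder_prod_normal_form: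
  assumes r2: "r \<ge> 2" and len: "length us = Suc r"
    and unit: "\<And>k. k < Suc r \<Longrightarrow> hinner r (us!k) (us!k) = 1"
    and prod: "householder_prod r us = (- eta r) \<cdot>\<^sub>m 1\<^sub>m r"
  shows "\<exists>vs. length vs = Suc r \<and> (\<forall>k<Suc r. householder r (vs!k) = householder r (us!k))
           \<and> (\<forall>j<Suc r. \<forall>l<Suc r. hinner r (vs!j) (vs!l) = model_gram r j l)"
proof -
  define g where "g j k = hinner r (us!j) (us!k)" for j k
  define D where "D = (1 - cnj (eta r)) / 2"
  have De: "- eta r * D = cnj D"
    using eta_mult_cnj_eta[of r] by (simp add: D_def algebra_simps)
  have "cnj (eta r) \<noteq> 1" using eta_neq_pm1(1)[OF r2] by (metis complex_cnj_cnj complex_cnj_one)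
  then have D0: "D \<noteq> 0" by (simp add: D_def)
  have rel1: "g 0 k * cnj (g 0 k) = cnj D * D" if "0 < k" "k < Suc r" for k
    using scalar_householder_prod_gram_relations(1)[OF r2 len unit prod that] unfolding g_def D_def .
  have rel2: "g j k * D = - cnj (eta r) * (g 0 k * cnj (g 0 j))" if "0 < j" "j < k" "k < Suc r" for j k
    using scalar_householder_prod_gram_relations(2)[OF r2 len unit prod that] unfolding g_def D_def .
  define \<phi> where "\<phi> k = (if k = 0 then 1 else cnj (g 0 k) / cnj D)" for k
  have unimodular: "cnj (\<phi> k) * \<phi> k = 1" if "k < Suc r" for k
    unfolding \<phi>_def using phase_normalized_gram(1)[of "eta r" D "Suc r" g k] De D0 rel1 rel2 that
    by blast
  have above: "cnj (\<phi> j) * \<phi> l * g j l = D" if "j < l" "l < Suc r" for j l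
    unfolding \<phi>_def using phase_normalized_gram(2)[of "eta r" D "Suc r" g j l] De D0 rel1 rel2 that
    by blast
  define vs where "vs = map (\<lambda>k a. \<phi> k * (us!k) a) [0..<Suc r]"
  have vs_nth: "vs!k = (\<lambda>a. \<phi> k * (us!k) a)" if "k < Suc r" for k
    using that by (simp add: vs_def del: upt_Suc)
  have upper: "hinner r (vs!j) (vs!l) = model_gram r j l" if "j \<le> l" "l < Suc r" for j l
  proof -
    have "hinner r (vs!j) (vs!l) = cnj (\<phi> j) * \<phi> l * g j l"
      using that by (simp add: vs_nth hinner_scale g_def)
    then show ?thesis
      using that unimodular[of l] above[of j l] unit[of l]
      by (cases "j = l") (simp_all add: model_gram_def g_def D_def)
  qed
  have "householder r (vs!k) = householder r (us!k)" if "k < Suc r" for k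
    using vs_nth[OF that] householder_phase unimodular[OF that] by (metis mult.commute)
  moreover have "length vs = Suc r" by (simp add: vs_def)
  ultimately show ?thesis using gram_eq_model_gram_if_upper[of "Suc r" r vs r] upper by blast
qed

definition lin_comb :: "nat \<Rightarrow> (nat \<Rightarrow> complex) \<Rightarrow> (nat \<Rightarrow> complex) list \<Rightarrow> nat \<Rightarrow> complex" where
  "lin_comb m \<alpha> us = (\<lambda>a. \<Sum>j<m. \<alpha> j * (us!j) a)"

lemma hinner_lin_comb:
  "hinner n (lin_comb m \<alpha> us) (lin_comb m \<beta> us) = (\<Sum>j<m. \<Sum>l<m. cnj (\<alpha> j) * \<beta> l * hinner n (us!j) (us!l))"
proof -
  have "hinner n (lin_comb m \<alpha> us) (lin_comb m \<beta> us)
      = (\<Sum>a<n. (\<Sum>j<m. cnj (\<alpha> j) * cnj ((us!j) a)) * (\<Sum>l<m. \<beta> l * (us!l) a))"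
    by (simp add: hinner_def lin_comb_def cnj_sum)
  also have "\<dots> = (\<Sum>a<n. \<Sum>j<m. \<Sum>l<m. cnj (\<alpha> j) * \<beta> l * (cnj ((us!j) a) * (us!l) a))"
    by (simp only: sum_product) (simp add: algebra_simps)
  also have "\<dots> = (\<Sum>j<m. \<Sum>a<n. \<Sum>l<m. cnj (\<alpha> j) * \<beta> l * (cnj ((us!j) a) * (us!l) a))"
    by (rule sum.swap)
  also have "\<dots> = (\<Sum>j<m. \<Sum>l<m. \<Sum>a<n. cnj (\<alpha> j) * \<beta> l * (cnj ((us!j) a) * (us!l) a))"
    by (rule sum.cong[OF refl], rule sum.swap)
  also have "\<dots> = (\<Sum>j<m. \<Sum>l<m. cnj (\<alpha> j) * \<beta> l * hinner n (us!j) (us!l))"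
    by (simp only: sum_distrib_left hinner_def)
  finally show ?thesis .
qed

lemma lin_comb_eq_0_transfer:
  assumes "\<And>j l. j < m \<Longrightarrow> l < m \<Longrightarrow> hinner n (us!j) (us!l) = hinner n (vs!j) (vs!l)"
    and "\<And>a. a < n \<Longrightarrow> lin_comb m \<alpha> us a = 0" and "a < n"
  shows "lin_comb m \<alpha> vs a = 0"
proof -
  have "hinner n (lin_comb m \<alpha> vs) (lin_comb m \<alpha> vs) = hinner n (lin_comb m \<alpha> us) (lin_comb m \<alpha> us)"
    unfolding hinner_lin_comb using assms(1) by simp
  also have "\<dots> = 0" by (simp add: hinner_def assms(2))
  finally show ?thesis using hinner_self_eq_0D assms(3) by blast
qed

lemma sum_minus_delta:
  fixes m k :: nat
  shows "(\<Sum>j<m. (\<beta> j - (if j = k then c else 0)) * f j)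
       = (\<Sum>j<m. \<beta> j * f j) - (if k < m then c * f k else (0::complex))"
proof -
  have "(\<Sum>j<m. (\<beta> j - (if j = k then c else 0)) * f j)
      = (\<Sum>j<m. \<beta> j * f j - (if j = k then c * f j else 0))"
    by (intro sum.cong) (auto simp: algebra_simps)
  then show ?thesis by (simp add: sum_subtractf sum.delta)
qed

lemma frame_reconstruct:
  assumes frame: "\<And>a b. a < n \<Longrightarrow> b < n \<Longrightarrow> (\<Sum>j<m. (us!j) a * cnj ((ys!j) b)) = (if a = b then c else 0)"
    and a: "a < n"
  shows "(\<Sum>j<m. hinner n (ys!j) w * (us!j) a) = c * w a"
proof -
  have "(\<Sum>j<m. hinner n (ys!j) w * (us!j) a) = (\<Sum>j<m. \<Sum>b<n. (us!j) a * cnj ((ys!j) b) * w b)"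
    by (simp add: hinner_def sum_distrib_left sum_distrib_right mult_ac)
  also have "\<dots> = (\<Sum>b<n. \<Sum>j<m. (us!j) a * cnj ((ys!j) b) * w b)" by (rule sum.swap)
  also have "\<dots> = (\<Sum>b<n. if a = b then c * w b else 0)"
    by (intro sum.cong refl) (simp add: frame[OF a] sum_distrib_right[symmetric])
  also have "\<dots> = c * w a" using a by simp
  finally show ?thesis .
qed

text \<open>For a tight frame \<open>us\<close> with dual family \<open>ys\<close> (\<open>\<Sum>\<^sub>j u\<^sub>j y\<^sub>j\<^sup>* = c I\<close>) and a family \<open>vs\<close> with
  the same Gram matrix, \<open>frame_map = c\<^sup>-\<^sup>1 \<Sum>\<^sub>j v\<^sub>j y\<^sub>j\<^sup>*\<close> is unitary and maps \<open>us\<close> to \<open>vs\<close>.\<close>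
definition frame_map ::
    "nat \<Rightarrow> nat \<Rightarrow> (nat \<Rightarrow> complex) list \<Rightarrow> (nat \<Rightarrow> complex) list \<Rightarrow> complex \<Rightarrow> complex mat" where
  "frame_map n m vs ys c = mat n n (\<lambda>(a,b). lin_comb m (\<lambda>j. cnj ((ys!j) b) / c) vs a)"

lemma mat_apply_frame_map:
  assumes frame: "\<And>a b. a < n \<Longrightarrow> b < n \<Longrightarrow> (\<Sum>j<m. (us!j) a * cnj ((ys!j) b)) = (if a = b then c else 0)"
    and c: "c \<noteq> 0"
    and gram: "\<And>j l. j < m \<Longrightarrow> l < m \<Longrightarrow> hinner n (us!j) (us!l) = hinner n (vs!j) (vs!l)"
    and k: "k < m" and a: "a < n"
  shows "mat_apply n (frame_map n m vs ys c) (us!k) a = (vs!k) a"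
proof -
  define \<beta> where "\<beta> j = hinner n (ys!j) (us!k)" for j
  have "lin_comb m (\<lambda>j. \<beta> j - (if j = k then c else 0)) us a' = 0" if "a' < n" for a'
    using frame_reconstruct[OF frame that, of "us!k"] k
    unfolding lin_comb_def sum_minus_delta by (simp add: \<beta>_def mult.commute)
  then have "lin_comb m (\<lambda>j. \<beta> j - (if j = k then c else 0)) vs a = 0"
    using lin_comb_eq_0_transfer[OF gram] a by blast
  then have sum_vs: "(\<Sum>j<m. \<beta> j * (vs!j) a) = c * (vs!k) a"
    using k unfolding lin_comb_def sum_minus_delta by simp
  have "mat_apply n (frame_map n m vs ys c) (us!k) a
      = (\<Sum>b<n. (\<Sum>j<m. cnj ((ys!j) b) / c * (vs!j) a) * (us!k) b)"
    using a by (simp add: mat_apply_def frame_map_def lin_comb_def)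
  also have "\<dots> = (\<Sum>b<n. \<Sum>j<m. (vs!j) a * cnj ((ys!j) b) * (us!k) b) / c"
    by (simp add: sum_divide_distrib sum_distrib_left sum_distrib_right mult_ac)
  also have "\<dots> = (\<Sum>j<m. \<Sum>b<n. (vs!j) a * cnj ((ys!j) b) * (us!k) b) / c"
    by (subst sum.swap) (rule refl)
  also have "\<dots> = (\<Sum>j<m. \<beta> j * (vs!j) a) / c"
    by (simp add: \<beta>_def hinner_def sum_distrib_left mult_ac)
  finally show ?thesis using sum_vs c by simp
qed

lemma frame_map_unitary:
  assumes frame: "\<And>a b. a < n \<Longrightarrow> b < n \<Longrightarrow> (\<Sum>j<m. (us!j) a * cnj ((ys!j) b)) = (if a = b then c else 0)"
    and c: "c \<noteq> 0"
    and gram: "\<And>j l. j < m \<Longrightarrow> l < m \<Longrightarrow> hinner n (us!j) (us!l) = hinner n (vs!j) (vs!l)"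
  shows "unitary n (frame_map n m vs ys c)"
proof -
  define X where "X = frame_map n m vs ys c"
  define B where "B b j = cnj ((ys!j) b) / c" for b j
  have X: "X \<in> carrier_mat n n" by (simp add: X_def frame_map_def)
  have X_index: "X $$ (a,b) = lin_comb m (B b) vs a" if "a < n" "b < n" for a b
    using that unfolding X_def frame_map_def B_def[abs_def] by simp
  have frame_B: "lin_comb m (B b) us a = (if a = b then 1 else 0)" if "a < n" "b < n" for a b
    using frame[OF that] c
    by (simp add: lin_comb_def B_def sum_divide_distrib[symmetric] mult.commute)
  have "adj X * X = 1\<^sub>m n"
  proof (rule eq_matI)
    fix b b' assume "b < dim_row (1\<^sub>m n :: complex mat)" "b' < dim_col (1\<^sub>m n :: complex mat)"
    then have b: "b < n" and b': "b' < n" by auto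
    have "(adj X * X) $$ (b,b') = (\<Sum>a<n. adj X $$ (b,a) * X $$ (a,b'))"
      by (rule index_mult_mat_sum[OF adj_carrier[OF X] X b b'])
    also have "\<dots> = hinner n (lin_comb m (B b) vs) (lin_comb m (B b') vs)"
      unfolding hinner_def using b b'
      by (intro sum.cong refl) (simp add: adj_index[OF X] X_index)
    also have "\<dots> = hinner n (lin_comb m (B b) us) (lin_comb m (B b') us)"
      unfolding hinner_lin_comb using gram by (intro sum.cong refl) simp
    also have "\<dots> = (\<Sum>a<n. (if a = b then 1 else 0) * (if a = b' then 1 else 0))"
      unfolding hinner_def using b b' by (intro sum.cong refl) (simp add: frame_B)
    also have "\<dots> = (1\<^sub>m n :: complex mat) $$ (b,b')" using b b' by simp
    finally show "(adj X * X) $$ (b,b') = (1\<^sub>m n :: complex mat) $$ (b,b')" .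
  qed (use X in auto)
  then show ?thesis
    using mat_mult_left_right_inverse[OF adj_carrier[OF X] X] X by (simp add: unitary_def X_def)
qed

text \<open>A tuple in \<open>\<M>\<close> is \<open>(\<eta>\<^sup>- H(u\<^sub>0), \<dots>, \<eta>\<^sup>- H(u\<^sub>r))\<close> with unit vectors \<open>u\<^sub>k\<close>; since \<open>\<eta>\<^sup>r\<^sup>+\<^sup>1 = -\<eta>\<close>,
  the condition \<open>C\<^sub>0 \<cdots> C\<^sub>r = I\<close> becomes \<open>H(u\<^sub>0) \<cdots> H(u\<^sub>r) = -\<eta> I\<close>.\<close>
lemma tuples_householder_family:
  assumes r2: "r \<ge> 2" and Cs: "Cs \<in> tuples r"
  obtains us where "length us = Suc r" "\<And>k. k < Suc r \<Longrightarrow> hinner r (us!k) (us!k) = 1"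
    "Cs = map (\<lambda>u. cnj (eta r) \<cdot>\<^sub>m householder r u) us"
    "householder_prod r us = (- eta r) \<cdot>\<^sub>m 1\<^sub>m r"
proof -
  have len: "length Cs = Suc r" and sub: "set Cs \<subseteq> conj_class r"
    and prod: "foldr (*) Cs (1\<^sub>m r) = 1\<^sub>m r"
    using Cs unfolding tuples_def by auto
  have "\<forall>C \<in> set Cs. \<exists>u. hinner r u u = 1 \<and> C = cnj (eta r) \<cdot>\<^sub>m householder r u"
    using conj_class_imp_householder r2 sub by auto
  from bchoice[OF this] obtain f
    where f: "\<forall>C \<in> set Cs. hinner r (f C) (f C) = 1 \<and> C = cnj (eta r) \<cdot>\<^sub>m householder r (f C)" ..
  define us where "us = map f Cs"
  have unit: "hinner r (us!k) (us!k) = 1" if "k < Suc r" for k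
    using f that len by (simp add: us_def)
  have Cs_eq: "Cs = map (\<lambda>u. cnj (eta r) \<cdot>\<^sub>m householder r u) us"
    unfolding us_def map_map
  proof (rule map_idI[symmetric])
    fix C assume "C \<in> set Cs"
    then show "((\<lambda>u. cnj (eta r) \<cdot>\<^sub>m householder r u) \<circ> f) C = C" using f by auto
  qed
  have len_us: "length us = Suc r" using len by (simp add: us_def)
  have "cnj (eta r) ^ Suc r \<cdot>\<^sub>m householder_prod r us = 1\<^sub>m r"
    using prod unfolding Cs_eq foldr_smult_householder len_us .
  then have "eta r ^ Suc r \<cdot>\<^sub>m (cnj (eta r) ^ Suc r \<cdot>\<^sub>m householder_prod r us) = eta r ^ Suc r \<cdot>\<^sub>m 1\<^sub>m r"
    by simp
  moreover have "eta r ^ Suc r * cnj (eta r) ^ Suc r = 1"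
    by (metis eta_mult_cnj_eta power_mult_distrib power_one)
  ultimately have "householder_prod r us = eta r ^ Suc r \<cdot>\<^sub>m 1\<^sub>m r" by (simp add: smult_smult_mat)
  then have "householder_prod r us = (- eta r) \<cdot>\<^sub>m 1\<^sub>m r" using eta_power_Suc r2 by simp
  then show ?thesis using that unit Cs_eq len_us by blast
qed

lemma tuples_normal_form:
  assumes r2: "r \<ge> 2" and Cs: "Cs \<in> tuples r"
  obtains vs where "length vs = Suc r"
    "\<And>j l. j < Suc r \<Longrightarrow> l < Suc r \<Longrightarrow> hinner r (vs!j) (vs!l) = model_gram r j l"
    "Cs = map (\<lambda>u. cnj (eta r) \<cdot>\<^sub>m householder r u) vs" "householder_prod r vs = (- eta r) \<cdot>\<^sub>m 1\<^sub>m r"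
proof -
  obtain us where us: "length us = Suc r" "\<And>k. k < Suc r \<Longrightarrow> hinner r (us!k) (us!k) = 1"
    "Cs = map (\<lambda>u. cnj (eta r) \<cdot>\<^sub>m householder r u) us" "householder_prod r us = (- eta r) \<cdot>\<^sub>m 1\<^sub>m r"
    using tuples_householder_family[OF r2 Cs] by blast
  obtain vs where vs: "length vs = Suc r"
    "\<And>k. k < Suc r \<Longrightarrow> householder r (vs!k) = householder r (us!k)"
    "\<And>j l. j < Suc r \<Longrightarrow> l < Suc r \<Longrightarrow> hinner r (vs!j) (vs!l) = model_gram r j l"
    using scalar_householder_prod_normal_form[OF r2 us(1,2,4)] by blast
  have "Cs = map (\<lambda>u. cnj (eta r) \<cdot>\<^sub>m householder r u) vs"
    unfolding us(3) by (rule nth_equalityI) (use us(1) vs(1,2) in auto)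
  moreover have "householder_prod r vs = (- eta r) \<cdot>\<^sub>m 1\<^sub>m r"
    using householder_prod_cong[of vs us r] vs us by simp
  ultimately show ?thesis using that vs(1,3) by blast
qed

lemma tuples_simconj:
  assumes r2: "r \<ge> 2" and Cs: "Cs \<in> tuples r" and Ds: "Ds \<in> tuples r"
  shows "(Cs, Ds) \<in> simconj r"
proof -
  obtain vs where vs: "length vs = Suc r"
    "\<And>j l. j < Suc r \<Longrightarrow> l < Suc r \<Longrightarrow> hinner r (vs!j) (vs!l) = model_gram r j l"
    "Cs = map (\<lambda>u. cnj (eta r) \<cdot>\<^sub>m householder r u) vs" "householder_prod r vs = (- eta r) \<cdot>\<^sub>m 1\<^sub>m r"
    using tuples_normal_form[OF r2 Cs] by blast
  obtain vs' where vs': "length vs' = Suc r"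
    "\<And>j l. j < Suc r \<Longrightarrow> l < Suc r \<Longrightarrow> hinner r (vs'!j) (vs'!l) = model_gram r j l"
    "Ds = map (\<lambda>u. cnj (eta r) \<cdot>\<^sub>m householder r u) vs'"
    using tuples_normal_form[OF r2 Ds] by blast
  have frame: "(\<Sum>j<Suc r. (vs!j) a * cnj ((householder_dual r vs ! j) b))
      = (if a = b then (1 + eta r) / 2 else 0)" if "a < r" "b < r" for a b
    using scalar_householder_prod_dual_sum[OF vs(4) that] vs(1) by simp
  have c0: "(1 + eta r) / 2 \<noteq> 0" using eta_neq_pm1(2)[OF r2] by (simp add: add_eq_0_iff)
  have gram: "hinner r (vs!j) (vs!l) = hinner r (vs'!j) (vs'!l)" if "j < Suc r" "l < Suc r" for j l
    using vs(2)[OF that] vs'(2)[OF that] by simp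
  define X where "X = frame_map r (Suc r) vs' (householder_dual r vs) ((1 + eta r) / 2)"
  have X: "unitary r X" unfolding X_def by (rule frame_map_unitary[OF frame c0 gram])
  have X_vs: "mat_apply r X (vs!k) a = (vs'!k) a" if "k < Suc r" "a < r" for k a
    unfolding X_def by (rule mat_apply_frame_map[OF frame c0 gram that])
  obtain U where U: "U \<in> SU r" "\<And>A. A \<in> carrier_mat r r \<Longrightarrow> U * A * adj U = X * A * adj X"
    using unitary_conj_by_SU[OF X] r2 by auto
  have "Ds!k = U * (Cs!k) * adj U" if k: "k < Suc r" for k
  proof -
    have "U * (Cs!k) * adj U = cnj (eta r) \<cdot>\<^sub>m householder r (mat_apply r X (vs!k))"
      using U(2)[of "Cs!k"] vs(1,3) k unitary_conj_smult_householder[OF X] by simp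
    also have "householder r (mat_apply r X (vs!k)) = householder r (vs'!k)"
      using X_vs[OF k] by (intro householder_cong) auto
    finally show ?thesis using vs'(1,3) k by simp
  qed
  then have "Ds = map (\<lambda>C. U * C * adj U) Cs" by (intro nth_equalityI) (use vs vs' in auto)
  then show ?thesis unfolding simconj_def using Cs Ds U(1) by blast
qed

subsection \<open>Existence: families with the model Gram matrix\<close>

lemma model_gram_twisted_gram:
  assumes gram: "\<And>j l. j < Suc r \<Longrightarrow> l < Suc r \<Longrightarrow> hinner r (us!j) (us!l) = model_gram r j l"
    and jk: "j < Suc r" "k < Suc r"
  shows "twisted_gram r ((1 + cnj (eta r)) / 2) us j k = (1 - cnj (eta r)) / 2"
proof -
  define e where "e = eta r"
  have he: "cnj e * e = 1" unfolding e_def by (rule cnj_eta_mult_eta)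
  consider "j = k" | "j < k" | "k < j" by linarith
  then show ?thesis
  proof cases
    case 3
    have g: "hinner r (us!j) (us!k) = (1 - e) / 2" using 3 gram[OF jk] by (simp add: model_gram_def e_def)
    have "twisted_gram r ((1 + cnj e) / 2) us j k = - cnj e * ((1 - e) / 2)"
      using 3 by (simp only: twisted_gram_def g) (simp add: field_simps)
    also have "\<dots> = (1 - cnj e) / 2" using he by (simp add: algebra_simps)
    finally show ?thesis by (simp add: e_def)
  qed (use gram[OF jk] in \<open>simp_all add: twisted_gram_def model_gram_def field_simps\<close>)
qed

lemma model_gram_dual_sum_eq_0:
  assumes len: "length us = Suc r"
    and gram: "\<And>j l. j < Suc r \<Longrightarrow> l < Suc r \<Longrightarrow> hinner r (us!j) (us!l) = model_gram r j l"
    and rel: "(\<Sum>k<Suc r. eta r ^ k * (us!k) b) = 0"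
  shows "(\<Sum>j<Suc r. (householder_dual r us ! j) b) = 0"
proof -
  have low: "hinner r (us!j) (us!k) = (1 - eta r) / 2" if "k < j" "j < Suc r" for j k
    using gram[of j k] that by (simp add: model_gram_def)
  have ee: "1 - 2 * ((1 - eta r) / 2) = eta r" by (simp add: field_simps)
  have "(\<Sum>j\<in>{0..<Suc r}. (householder_dual r us ! j) b) = (\<Sum>j\<in>{0..<Suc r}. eta r ^ j * (us!j) b)"
    using householder_dual_tail_sum[OF len low, of 0 b] unfolding ee by simp
  then show ?thesis using rel by (simp add: atLeast0LessThan)
qed

lemma dual_frame_of_spanning:
  assumes dual: "\<And>b k. b < n \<Longrightarrow> k < m \<Longrightarrow> (\<Sum>j<m. (ys!j) b * hinner n (us!j) (us!k)) = c * (us!k) b"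
    and span: "\<And>a'. a' < n \<Longrightarrow> \<exists>\<gamma>. \<forall>a<n. (\<Sum>k<m. \<gamma> k * (us!k) a) = (if a = a' then 1 else 0)"
    and ab: "a < n" "b < n"
  shows "(\<Sum>j<m. (us!j) a * cnj ((ys!j) b)) = (if a = b then cnj c else 0)"
proof -
  define Z where "Z a' = (\<Sum>j<m. (ys!j) b * cnj ((us!j) a'))" for a'
  have Z_us: "(\<Sum>a'<n. Z a' * (us!k) a') = c * (us!k) b" if "k < m" for k
  proof -
    have "(\<Sum>a'<n. Z a' * (us!k) a') = (\<Sum>a'<n. \<Sum>j<m. (ys!j) b * (cnj ((us!j) a') * (us!k) a'))"
      by (simp add: Z_def sum_distrib_right mult.assoc)
    also have "\<dots> = (\<Sum>j<m. \<Sum>a'<n. (ys!j) b * (cnj ((us!j) a') * (us!k) a'))" by (rule sum.swap)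
    also have "\<dots> = (\<Sum>j<m. (ys!j) b * hinner n (us!j) (us!k))"
      by (simp add: hinner_def sum_distrib_left)
    finally show ?thesis using dual[OF ab(2) that] by simp
  qed
  obtain \<gamma> where \<gamma>: "\<And>a'. a' < n \<Longrightarrow> (\<Sum>k<m. \<gamma> k * (us!k) a') = (if a' = a then 1 else 0)"
    using span[OF ab(1)] by blast
  have "(\<Sum>k<m. \<gamma> k * (\<Sum>a'<n. Z a' * (us!k) a')) = (\<Sum>a'<n. Z a' * (\<Sum>k<m. \<gamma> k * (us!k) a'))"
    by (simp add: sum_distrib_left sum.swap[of _ "{..<m}"] mult_ac)
  also have "\<dots> = Z a" using ab(1) by (simp add: \<gamma> if_distrib cong: if_cong)
  finally have Z_a: "(\<Sum>k<m. \<gamma> k * (\<Sum>a'<n. Z a' * (us!k) a')) = Z a" .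
  have "(\<Sum>k<m. \<gamma> k * (\<Sum>a'<n. Z a' * (us!k) a')) = c * (\<Sum>k<m. \<gamma> k * (us!k) b)"
    by (simp add: Z_us sum_distrib_left mult_ac)
  then have "Z a = c * (if b = a then 1 else 0)" using Z_a \<gamma>[OF ab(2)] by simp
  moreover have "(\<Sum>j<m. (us!j) a * cnj ((ys!j) b)) = cnj (Z a)"
    by (simp add: Z_def cnj_sum mult.commute)
  ultimately show ?thesis by auto
qed

lemma model_gram_householder_prod:
  assumes len: "length us = Suc r"
    and gram: "\<And>j l. j < Suc r \<Longrightarrow> l < Suc r \<Longrightarrow> hinner r (us!j) (us!l) = model_gram r j l"
    and rel: "\<And>a. a < r \<Longrightarrow> (\<Sum>k<Suc r. eta r ^ k * (us!k) a) = 0"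
    and span: "\<And>a'. a' < r \<Longrightarrow> \<exists>\<gamma>. \<forall>a<r. (\<Sum>k<Suc r. \<gamma> k * (us!k) a) = (if a = a' then 1 else 0)"
  shows "householder_prod r us = (- eta r) \<cdot>\<^sub>m 1\<^sub>m r"
proof (rule eq_matI)
  fix a b
  assume "a < dim_row ((- eta r) \<cdot>\<^sub>m 1\<^sub>m r :: complex mat)" "b < dim_col ((- eta r) \<cdot>\<^sub>m 1\<^sub>m r :: complex mat)"
  then have ab: "a < r" "b < r" by auto
  define c where "c = (1 + cnj (eta r)) / 2"
  let ?ys = "householder_dual r us"
  have "(\<Sum>j<Suc r. (?ys!j) b' * hinner r (us!j) (us!k)) = c * (us!k) b'"
    if "b' < r" "k < Suc r" for b' k
  proof -
    have "(\<Sum>j<Suc r. twisted_gram r c us j k * (?ys!j) b') = (1 - cnj (eta r)) / 2 * (\<Sum>j<Suc r. (?ys!j) b')"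
      unfolding sum_distrib_left
      by (intro sum.cong refl) (simp add: c_def model_gram_twisted_gram[OF gram _ that(2)])
    also have "\<dots> = 0" using model_gram_dual_sum_eq_0[OF len gram rel[OF that(1)]] by simp
    finally show ?thesis using twisted_gram_dual_sum[of k us r c b'] that len by simp
  qed
  from dual_frame_of_spanning[OF this span ab]
  have "householder_prod r us $$ (a,b) = (if a = b then 1 else 0) - 2 * (if a = b then cnj c else 0)"
    using householder_prod_index[OF ab, of us] len by simp
  then show "householder_prod r us $$ (a,b) = ((- eta r) \<cdot>\<^sub>m 1\<^sub>m r) $$ (a,b)"
    using ab by (cases "a = b") (auto simp: c_def field_simps)
qed (auto simp: carrier_matD[OF householder_prod_carrier])

subsection \<open>Existence: an explicit family\<close>

lemma cis_int_2pi: "cis (2 * pi * real_of_int z) = 1"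
  using cos_int_2pin[of z] sin_int_2pin[of z] by (simp add: complex_eq_iff)

lemma sum_roots_of_unity:
  fixes d :: int
  assumes m: "m > 0" and dm: "\<bar>d\<bar> < int m"
  shows "(\<Sum>k<m. cis (2 * pi * real k * real_of_int d / real m)) = (if d = 0 then of_nat m else 0)"
proof (cases "d = 0")
  case False
  define q where "q = cis (2 * pi * real_of_int d / real m)"
  have q1: "q \<noteq> 1"
  proof
    assume "q = 1"
    then have "cos (2 * pi * real_of_int d / real m) = 1"
      unfolding q_def by (metis one_complex.sel(1) cis.sel(1))
    then obtain z :: int where "2 * pi * real_of_int d / real m = real_of_int z * 2 * pi"
      using cos_one_2pi_int by blast
    then have "real_of_int d = real_of_int z * real m" using m by (simp add: field_simps)
    then have dz: "d = z * int m" by (metis of_int_eq_iff of_int_mult of_int_of_nat_eq)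
    then have "z \<noteq> 0" using False by auto
    then have "\<bar>z * int m\<bar> \<ge> int m" using m by (simp add: abs_mult mult_le_cancel_right1)
    then show False using dz dm by simp
  qed
  have "q ^ m = cis (2 * pi * real_of_int d)" using m unfolding q_def DeMoivre by simp
  then have qm: "q ^ m = 1" by (simp add: cis_int_2pi)
  have "(\<Sum>k<m. cis (2 * pi * real k * real_of_int d / real m)) = (\<Sum>k<m. q ^ k)"
    unfolding q_def DeMoivre by (simp add: mult_ac)
  also have "\<dots> = 0" using q1 qm by (simp add: sum_gp_strict)
  finally show ?thesis using False by simp
qed simp

lemma cis_diff_half: "cis a - cis b = 2 * \<i> * complex_of_real (sin ((a - b) / 2)) * cis ((a + b) / 2)"
proof -
  have "cis a = cis ((a + b) / 2) * cis ((a - b) / 2)" by (simp add: cis_mult field_simps)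
  moreover have "cis b = cis ((a + b) / 2) * cis (- ((a - b) / 2))" by (simp add: cis_mult field_simps)
  moreover have "cis x - cis (- x) = 2 * \<i> * complex_of_real (sin x)" for x
    by (simp add: complex_eq_iff)
  ultimately show ?thesis by (metis mult.commute right_diff_distrib)
qed

lemma cis_add_half: "cis a + cis b = 2 * complex_of_real (cos ((a - b) / 2)) * cis ((a + b) / 2)"
proof -
  have "cis a = cis ((a + b) / 2) * cis ((a - b) / 2)" by (simp add: cis_mult field_simps)
  moreover have "cis b = cis ((a + b) / 2) * cis (- ((a - b) / 2))" by (simp add: cis_mult field_simps)
  moreover have "cis x + cis (- x) = 2 * complex_of_real (cos x)" for x
    by (simp add: complex_eq_iff)
  ultimately show ?thesis by (metis mult.commute distrib_left)
qed

definition root_angle :: "nat \<Rightarrow> nat \<Rightarrow> real" where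
  "root_angle r k = 2 * pi * real k / real (Suc r)"

definition root_unity :: "nat \<Rightarrow> nat \<Rightarrow> complex" where
  "root_unity r k = cis (root_angle r k)"

text \<open>\<open>twisted_row r t = \<eta>\<^sup>t \<langle>f\<^sub>0, f\<^sub>t\<rangle>\<close> for the family \<open>f\<^sub>k(a) = \<surd>w\<^sub>a (\<eta>\<^sup>- \<omega>\<^sub>a\<^sub>+\<^sub>1)\<^sup>k\<close> we are after,
  where \<open>\<omega>\<^sub>k = root_unity r k\<close>; so the weights \<open>w\<^sub>a\<close> must be the discrete Fourier coefficients
  \<open>row_fourier r (a+1)\<close>. The coefficient at \<open>\<omega>\<^sub>0 = 1\<close> vanishes, and the others are positive reals.\<close>
definition twisted_row :: "nat \<Rightarrow> nat \<Rightarrow> complex" where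
  "twisted_row r t = eta r ^ t * model_gram r 0 t"

definition row_fourier :: "nat \<Rightarrow> nat \<Rightarrow> complex" where
  "row_fourier r k = (\<Sum>s<Suc r. twisted_row r s * cnj (root_unity r k) ^ s) / of_nat (Suc r)"

definition eta_angle :: "nat \<Rightarrow> real" where "eta_angle r = pi / real r"

definition weight :: "nat \<Rightarrow> nat \<Rightarrow> real" where
  "weight r a = cos (eta_angle r / 2) * sin (root_angle r (Suc a) / 2)
      / (real (Suc r) * sin ((root_angle r (Suc a) - eta_angle r) / 2))"

lemma root_unity_0: "root_unity r 0 = 1" by (simp add: root_unity_def root_angle_def)

lemma root_unity_nonzero: "root_unity r k \<noteq> 0" by (simp add: root_unity_def)

lemma cnj_root_unity: "cnj (root_unity r k) = inverse (root_unity r k)"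
  by (simp add: root_unity_def cis_cnj cis_inverse)

lemma cnj_root_unity_mult: "cnj (root_unity r x) * root_unity r x = 1"
  by (simp add: root_unity_def cis_cnj cis_mult)

lemma root_unity_power_Suc: "root_unity r k ^ Suc r = 1"
proof -
  have "real (Suc r) * root_angle r k = 2 * pi * real_of_int (int k)"
    unfolding root_angle_def by (simp del: of_nat_Suc)
  then show ?thesis unfolding root_unity_def DeMoivre by (simp add: cis_int_2pi)
qed

lemma root_unity_power_mult_cnj_power:
  "root_unity r k ^ t * cnj (root_unity r k) ^ s
     = cis (2 * pi * real k * real_of_int (int t - int s) / real (Suc r))"
proof -
  have "root_unity r k ^ t * cnj (root_unity r k) ^ s
      = cis (real t * root_angle r k - real s * root_angle r k)"
    by (simp add: root_unity_def DeMoivre cis_cnj cis_mult)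
  also have "real t * root_angle r k - real s * root_angle r k
      = 2 * pi * real k * real_of_int (int t - int s) / real (Suc r)"
    by (simp add: root_angle_def algebra_simps diff_divide_distrib)
  finally show ?thesis .
qed

lemma root_unity_power_mult_cnj:
  "root_unity r x ^ k * cnj (root_unity r y) ^ k
     = cis (2 * pi * real k * real_of_int (int x - int y) / real (Suc r))"
proof -
  have "root_unity r x ^ k * cnj (root_unity r y) ^ k
      = cis (real k * root_angle r x - real k * root_angle r y)"
    by (simp add: root_unity_def DeMoivre cis_cnj cis_mult)
  also have "real k * root_angle r x - real k * root_angle r y
      = 2 * pi * real k * real_of_int (int x - int y) / real (Suc r)"
    by (simp add: root_angle_def algebra_simps diff_divide_distrib)
  finally show ?thesis .
qed

lemma twisted_row_fourier: assumes "t \<le> r"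
  shows "(\<Sum>k<Suc r. row_fourier r k * root_unity r k ^ t) = twisted_row r t"
proof -
  have "(\<Sum>k<Suc r. row_fourier r k * root_unity r k ^ t)
      = (\<Sum>k<Suc r. \<Sum>s<Suc r. twisted_row r s * (root_unity r k ^ t * cnj (root_unity r k) ^ s))
        / of_nat (Suc r)"
    by (simp add: row_fourier_def sum_divide_distrib sum_distrib_left sum_distrib_right mult_ac)
  also have "\<dots> = (\<Sum>s<Suc r. twisted_row r s
      * (\<Sum>k<Suc r. cis (2 * pi * real k * real_of_int (int t - int s) / real (Suc r)))) / of_nat (Suc r)"
    by (subst sum.swap) (simp add: root_unity_power_mult_cnj_power sum_distrib_left)
  also have "\<dots>
      = (\<Sum>s<Suc r. twisted_row r s * (if int t - int s = 0 then of_nat (Suc r) else 0)) / of_nat (Suc r)"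
  proof -
    have "(\<Sum>k<Suc r. cis (2 * pi * real k * real_of_int (int t - int s) / real (Suc r)))
        = (if int t - int s = 0 then of_nat (Suc r) else 0)" if "s < Suc r" for s
      by (rule sum_roots_of_unity) (use that assms in auto)
    then show ?thesis by (intro arg_cong[where f = "\<lambda>x. x / _"] sum.cong refl) simp
  qed
  also have "\<dots> = twisted_row r t"
    using assms of_nat_neq_0[of r, where 'a=complex] by (simp add: if_distrib cong: if_cong)
  finally show ?thesis .
qed

lemma sum_twisted_row:
  "(\<Sum>s<Suc r. twisted_row r s * w ^ s)
     = (1 + cnj (eta r)) / 2 + (1 - cnj (eta r)) / 2 * (\<Sum>s<Suc r. (eta r * w) ^ s)"
proof -
  have "(\<Sum>s<Suc r. twisted_row r s * w ^ s)
      = (\<Sum>s<Suc r. (1 - cnj (eta r)) / 2 * (eta r * w) ^ s + (if s = 0 then (1 + cnj (eta r)) / 2 else 0))"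
    by (intro sum.cong refl) (auto simp: twisted_row_def model_gram_def power_mult_distrib field_simps)
  also have "\<dots> = (1 - cnj (eta r)) / 2 * (\<Sum>s<Suc r. (eta r * w) ^ s) + (1 + cnj (eta r)) / 2"
    by (simp add: sum.distrib sum_distrib_left)
  finally show ?thesis by (simp only: add.commute)
qed

text \<open>Summing \<open>sum_twisted_row\<close> as a geometric series, using \<open>(\<eta> \<omega>\<^sup>-)\<^sup>r\<^sup>+\<^sup>1 = -\<eta>\<close>.\<close>
lemma row_fourier_eq: assumes r2: "r \<ge> 2"
  shows "row_fourier r k
       = (1 + eta r) * (root_unity r k - 1) / (2 * (root_unity r k - eta r)) / of_nat (Suc r)"
proof -
  define e where "e = eta r"
  define w where "w = root_unity r k"
  have e: "e \<noteq> 1" "e \<noteq> -1" "e \<noteq> 0" using eta_neq_pm1[OF r2] eta_nonzero by (simp_all add: e_def)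
  have w0: "w \<noteq> 0" using root_unity_nonzero by (simp add: w_def)
  define y where "y = e * inverse w"
  have wm: "w ^ Suc r = 1" using root_unity_power_Suc by (simp add: w_def)
  have ym: "y ^ Suc r = - e"
    unfolding y_def power_mult_distrib power_inverse wm using eta_power_Suc[of r] r2 by (simp add: e_def)
  have y1: "y \<noteq> 1" using ym e(2) by (metis minus_equation_iff power_one)
  have we: "w - e \<noteq> 0"
  proof
    assume "w - e = 0"
    then have "y = 1" using w0 by (simp add: y_def)
    then show False using y1 by simp
  qed
  have geo: "(\<Sum>s<Suc r. y ^ s) = (1 + e) / (1 - y)" using y1 ym by (simp add: sum_gp_strict)
  have "(\<Sum>s<Suc r. twisted_row r s * cnj w ^ s) = (1 + cnj e) / 2 + (1 - cnj e) / 2 * ((1 + e) / (1 - y))"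
    using sum_twisted_row[of r "cnj w"] geo unfolding w_def cnj_root_unity by (simp add: y_def e_def w_def)
  also have "\<dots> = (1 + e) * (w - 1) / (2 * (w - e))"
  proof -
    have yy: "1 - y = (w - e) / w" using w0 by (simp add: y_def field_simps)
    have ce: "cnj e = inverse e" unfolding e_def by (rule cnj_eta)
    show ?thesis unfolding yy ce using e w0 we by (simp add: field_simps)
  qed
  finally show ?thesis by (simp add: row_fourier_def e_def w_def)
qed

lemma row_fourier_0: assumes "r \<ge> 2" shows "row_fourier r 0 = 0"
  using row_fourier_eq[OF assms, of 0] by (simp add: root_unity_0)

lemma root_angle_bounds: assumes r2: "r \<ge> 2" and a: "a < r"
  shows "0 < root_angle r (Suc a) / 2" "root_angle r (Suc a) / 2 < pi"
    "0 < (root_angle r (Suc a) - eta_angle r) / 2" "(root_angle r (Suc a) - eta_angle r) / 2 < pi"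
    "0 < eta_angle r / 2" "eta_angle r / 2 < pi / 2"
proof -
  have angle: "root_angle r (Suc a) / 2 = pi * (real (Suc a) / real (Suc r))"
    unfolding root_angle_def by (simp add: field_simps)
  have q: "real (Suc a) / real (Suc r) < 1" using a by simp
  show "0 < root_angle r (Suc a) / 2" unfolding angle by simp
  show lt: "root_angle r (Suc a) / 2 < pi"
    unfolding angle using mult_strict_left_mono[OF q pi_gt_zero] by simp
  have pos: "0 < eta_angle r" using r2 by (simp add: eta_angle_def)
  have "real (Suc r) < 2 * real r * real (Suc a)"
  proof -
    have "Suc r < 2 * r * Suc a" using r2 by (simp add: less_le_trans[of _ "2 * r"])
    then show ?thesis by (metis of_nat_less_iff of_nat_mult of_nat_numeral)
  qed
  then have "1 / real r < 2 * real (Suc a) / real (Suc r)" using r2 by (simp add: field_simps)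
  then have "pi * (1 / real r) < pi * (2 * real (Suc a) / real (Suc r))"
    by (rule mult_strict_left_mono) (rule pi_gt_zero)
  then have "eta_angle r < root_angle r (Suc a)"
    by (simp add: eta_angle_def root_angle_def algebra_simps)
  then show "0 < (root_angle r (Suc a) - eta_angle r) / 2" by simp
  show "(root_angle r (Suc a) - eta_angle r) / 2 < pi" using lt pos by simp
  show "0 < eta_angle r / 2" using pos by simp
  show "eta_angle r / 2 < pi / 2" using r2 by (simp add: eta_angle_def field_simps)
qed

lemma weight_pos: assumes "r \<ge> 2" "a < r" shows "weight r a > 0"
proof -
  note b = root_angle_bounds[OF assms]
  have "cos (eta_angle r / 2) > 0" using b(5,6) by (intro cos_gt_zero_pi) auto
  moreover have "sin (root_angle r (Suc a) / 2) > 0" using b(1,2) by (rule sin_gt_zero)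
  moreover have "sin ((root_angle r (Suc a) - eta_angle r) / 2) > 0" using b(3,4) by (rule sin_gt_zero)
  ultimately show ?thesis by (simp add: weight_def)
qed

lemma row_fourier_Suc: assumes r2: "r \<ge> 2" and a: "a < r"
  shows "row_fourier r (Suc a) = complex_of_real (weight r a)"
proof -
  define \<alpha> where "\<alpha> = root_angle r (Suc a)"
  define \<beta> where "\<beta> = eta_angle r"
  define K where "K = cis ((\<alpha> + \<beta>) / 2)"
  have K0: "K \<noteq> 0" by (simp add: K_def)
  have S2: "sin ((\<alpha> - \<beta>) / 2) \<noteq> 0"
    using sin_gt_zero[OF root_angle_bounds(3,4)[OF assms]] by (simp add: \<alpha>_def \<beta>_def)
  have e: "eta r = cis \<beta>" by (simp add: eta_def eta_angle_def \<beta>_def)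
  have w: "root_unity r (Suc a) = cis \<alpha>" by (simp add: root_unity_def \<alpha>_def)
  have "(1 + eta r) * (root_unity r (Suc a) - 1)
      = 4 * \<i> * complex_of_real (cos (\<beta> / 2)) * complex_of_real (sin (\<alpha> / 2)) * (cis (\<beta> / 2) * cis (\<alpha> / 2))"
    using cis_add_half[of 0 \<beta>] cis_diff_half[of \<alpha> 0] by (simp add: e w algebra_simps)
  also have "cis (\<beta> / 2) * cis (\<alpha> / 2) = K" by (simp add: K_def cis_mult add_divide_distrib add.commute)
  finally have num: "(1 + eta r) * (root_unity r (Suc a) - 1)
      = 4 * \<i> * complex_of_real (cos (\<beta> / 2)) * complex_of_real (sin (\<alpha> / 2)) * K" .
  have den: "root_unity r (Suc a) - eta r = 2 * \<i> * complex_of_real (sin ((\<alpha> - \<beta>) / 2)) * K"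
    using cis_diff_half[of \<alpha> \<beta>] by (simp add: w e K_def)
  show ?thesis
    unfolding row_fourier_eq[OF r2] num den using K0 S2
    by (simp add: weight_def \<alpha>_def \<beta>_def field_simps)
qed

lemma weighted_root_sum: assumes r2: "r \<ge> 2" and t: "t \<le> r"
  shows "(\<Sum>a<r. complex_of_real (weight r a) * root_unity r (Suc a) ^ t) = twisted_row r t"
proof -
  have "twisted_row r t
      = row_fourier r 0 * root_unity r 0 ^ t + (\<Sum>a<r. row_fourier r (Suc a) * root_unity r (Suc a) ^ t)"
    using twisted_row_fourier[OF t] by (simp add: sum.lessThan_Suc_shift)
  then show ?thesis using row_fourier_0[OF r2] row_fourier_Suc[OF r2] by simp
qed

definition node :: "nat \<Rightarrow> nat \<Rightarrow> complex" where "node r a = cnj (eta r) * root_unity r (Suc a)"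

definition model_family :: "nat \<Rightarrow> (nat \<Rightarrow> complex) list" where
  "model_family r = map (\<lambda>k a. complex_of_real (sqrt (weight r a)) * node r a ^ k) [0..<Suc r]"

lemma model_family_length: "length (model_family r) = Suc r" by (simp add: model_family_def)

lemma model_family_nth:
  "k < Suc r \<Longrightarrow> model_family r ! k = (\<lambda>a. complex_of_real (sqrt (weight r a)) * node r a ^ k)"
  unfolding model_family_def by (simp del: upt_Suc)

lemma cnj_node_mult: "cnj (node r a) * node r a = 1"
  using cnj_eta_mult_eta[of r] cnj_root_unity_mult[of r "Suc a"] by (simp add: node_def algebra_simps)

lemma eta_mult_node: "eta r * node r a = root_unity r (Suc a)"
  using eta_mult_cnj_eta[of r] by (simp add: node_def mult.assoc[symmetric])

lemma model_family_gram_upper: assumes r2: "r \<ge> 2" and jl: "j \<le> l" "l < Suc r"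
  shows "hinner r (model_family r ! j) (model_family r ! l) = model_gram r j l"
proof -
  define t where "t = l - j"
  have l: "l = j + t" and t: "t \<le> r" using jl by (simp_all add: t_def)
  have sqrt_weight: "cnj (complex_of_real (sqrt (weight r a))) * complex_of_real (sqrt (weight r a))
      = complex_of_real (weight r a)" if "a < r" for a
    using weight_pos[OF r2 that] by (simp flip: of_real_mult)
  have node_powers: "cnj (node r a) ^ j * node r a ^ l = node r a ^ t" for a
    unfolding l power_add power_mult_distrib[symmetric] mult.assoc[symmetric]
    by (simp add: cnj_node_mult)
  have "hinner r (model_family r ! j) (model_family r ! l)
      = (\<Sum>a<r. complex_of_real (weight r a) * (cnj (node r a) ^ j * node r a ^ l))"
    unfolding hinner_def using jl sqrt_weight
    by (intro sum.cong refl) (auto simp: model_family_nth algebra_simps)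
  also have "\<dots> = cnj (eta r) ^ t * (\<Sum>a<r. complex_of_real (weight r a) * root_unity r (Suc a) ^ t)"
    by (simp only: node_powers) (simp add: node_def power_mult_distrib sum_distrib_left mult_ac)
  also have "\<dots> = (cnj (eta r) * eta r) ^ t * model_gram r 0 t"
    by (simp add: weighted_root_sum[OF r2 t] twisted_row_def power_mult_distrib)
  also have "\<dots> = model_gram r j l"
    using l by (simp add: cnj_eta_mult_eta model_gram_def)
  finally show ?thesis .
qed

lemma model_family_gram: assumes r2: "r \<ge> 2" and jl: "j < Suc r" "l < Suc r"
  shows "hinner r (model_family r ! j) (model_family r ! l) = model_gram r j l"
  using gram_eq_model_gram_if_upper[OF model_family_gram_upper[OF r2] jl] .

lemma model_family_relation: assumes a: "a < r"
  shows "(\<Sum>k<Suc r. eta r ^ k * (model_family r ! k) a) = 0"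
proof -
  have "(\<Sum>k<Suc r. eta r ^ k * (model_family r ! k) a)
      = complex_of_real (sqrt (weight r a)) * (\<Sum>k<Suc r. root_unity r (Suc a) ^ k)"
    by (simp add: model_family_nth sum_distrib_left eta_mult_node[symmetric] power_mult_distrib mult_ac)
  also have "(\<Sum>k<Suc r. root_unity r (Suc a) ^ k)
      = (\<Sum>k<Suc r. cis (2 * pi * real k * real_of_int (int (Suc a) - int 0) / real (Suc r)))"
    using root_unity_power_mult_cnj[of r "Suc a" _ 0] by (simp add: root_unity_0)
  also have "\<dots> = 0" using sum_roots_of_unity[of "Suc r" "int (Suc a) - int 0"] a by simp
  finally show ?thesis by simp
qed

lemma model_family_span: assumes r2: "r \<ge> 2" and a': "a' < r"
  shows "\<exists>\<gamma>. \<forall>a<r. (\<Sum>k<Suc r. \<gamma> k * (model_family r ! k) a) = (if a = a' then 1 else 0)"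
proof -
  define sq where "sq a = complex_of_real (sqrt (weight r a))" for a
  have sq0: "sq a' \<noteq> 0" using weight_pos[OF r2 a'] by (simp add: sq_def)
  define \<gamma> where "\<gamma> k = cnj (node r a') ^ k / (of_nat (Suc r) * sq a')" for k
  have "(\<Sum>k<Suc r. \<gamma> k * (model_family r ! k) a) = (if a = a' then 1 else 0)" if a: "a < r" for a
  proof -
    have powers: "node r a ^ k * cnj (node r a') ^ k
        = cis (2 * pi * real k * real_of_int (int (Suc a) - int (Suc a')) / real (Suc r))" for k
    proof -
      have "node r a ^ k * cnj (node r a') ^ k
          = (cnj (eta r) * eta r) ^ k * (root_unity r (Suc a) ^ k * cnj (root_unity r (Suc a')) ^ k)"
        by (simp add: node_def power_mult_distrib mult_ac)
      then show ?thesis using cnj_eta_mult_eta[of r] by (simp add: root_unity_power_mult_cnj)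
    qed
    have "(\<Sum>k<Suc r. \<gamma> k * (model_family r ! k) a)
        = sq a / (of_nat (Suc r) * sq a') * (\<Sum>k<Suc r. node r a ^ k * cnj (node r a') ^ k)"
      by (simp add: \<gamma>_def model_family_nth sq_def sum_distrib_left mult_ac)
    also have "(\<Sum>k<Suc r. node r a ^ k * cnj (node r a') ^ k)
        = (if int (Suc a) - int (Suc a') = 0 then of_nat (Suc r) else 0)"
      unfolding powers by (rule sum_roots_of_unity) (use a a' in auto)
    also have "sq a / (of_nat (Suc r) * sq a') * \<dots> = (if a = a' then 1 else 0)"
      using sq0 of_nat_neq_0[of r, where 'a=complex] by (simp add: field_simps del: of_nat_Suc)
    finally show ?thesis .
  qed
  then show ?thesis by blast
qed

lemma tuples_nonempty: assumes r2: "r \<ge> 2" shows "tuples r \<noteq> {}"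
proof -
  define Cs where "Cs = map (\<lambda>u. cnj (eta r) \<cdot>\<^sub>m householder r u) (model_family r)"
  have "length Cs = r + 1" by (simp add: Cs_def model_family_length)
  moreover have "set Cs \<subseteq> conj_class r"
  proof
    fix C assume "C \<in> set Cs"
    then obtain k where k: "k < Suc r" "C = cnj (eta r) \<cdot>\<^sub>m householder r (model_family r ! k)"
      unfolding Cs_def by (auto simp: in_set_conv_nth model_family_length)
    have "hinner r (model_family r ! k) (model_family r ! k) = 1"
      using model_family_gram[OF r2 k(1) k(1)] by (simp add: model_gram_def)
    then show "C \<in> conj_class r" using householder_in_conj_class[of r] r2 k(2) by simp
  qed
  moreover have "foldr (*) Cs (1\<^sub>m r) = 1\<^sub>m r"
  proof -
    have prod: "householder_prod r (model_family r) = (- eta r) \<cdot>\<^sub>m 1\<^sub>m r"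
      by (rule model_gram_householder_prod[OF model_family_length model_family_gram[OF r2]
            model_family_relation model_family_span[OF r2]])
    have "foldr (*) Cs (1\<^sub>m r) = cnj (eta r) ^ Suc r \<cdot>\<^sub>m ((- eta r) \<cdot>\<^sub>m 1\<^sub>m r)"
      unfolding Cs_def foldr_smult_householder model_family_length prod ..
    also have "cnj (eta r) ^ Suc r = - cnj (eta r)"
      using eta_power_Suc[of r] r2
      by (metis complex_cnj_power complex_cnj_minus not_numeral_le_zero not_gr0)
    also have "- cnj (eta r) \<cdot>\<^sub>m ((- eta r) \<cdot>\<^sub>m 1\<^sub>m r) = (1 :: complex) \<cdot>\<^sub>m 1\<^sub>m r"
      using cnj_eta_mult_eta[of r] by (simp add: smult_smult_mat)
    finally show ?thesis by simp
  qed
  ultimately show ?thesis unfolding tuples_def by blast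
qed

theorem proposition9p3:
  fixes r :: nat
  assumes "r \<ge> 2"
  shows "\<exists>x. moduli0 r = {x}"
proof -
  have "simconj r `` {Cs} = tuples r" if "Cs \<in> tuples r" for Cs
    using tuples_simconj[OF assms that] unfolding simconj_def by auto
  then have "moduli0 r = {tuples r}"
    using tuples_nonempty[OF assms] unfolding moduli0_def quotient_def by auto
  then show ?thesis by blast
qed

end
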